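(* Let $\nabla$ be a module connection on $M$ with associated connection $(\mathsf K_\nabla,\mathsf H_\nabla)$ on $\mathsf q_M$, and suppose $2$ is a unit in $A$. Then $\nabla^2(m)=\tfrac12\,\phi(\mathsf C_{\mathsf K_\nabla}(m))$ for all $m\in M$. Moreover, $\nabla^2=0$ if and only if $(\mathsf K_\nabla,\mathsf H_\nabla)$ is flat.
   Context: Fix a commutative ring $R$, a commutative $R$-algebra $A$ and an $A$-module $M$; algebra maps are $R$-algebra homomorphisms. $\Omega(A)$ is the Kähler module of $A$ over $R$ with universal derivation $\mathsf d$, and a module connection on $M$ is an $R$-linear $\nabla:M\to\Omega(A)\otimes_AM$ with $\nabla(am)=a\nabla(m)+\mathsf d(a)\otimes m$. $\mathsf S_A(M)$ is the symmetric $A$-algebra on $M$; for an algebra $B$, $\mathsf T(B)=\mathrm{Sym}_B(\Omega(B))$ with universal derivation $\mathsf d:B\to\mathsf T(B)$, and $\mathsf T^2(B)=\mathsf T(\mathsf T(B))$ with universal derivation $\mathsf d':\mathsf T(B)\to\mathsf T^2(B)$. For an algebra map $h:X\to Y$, $\mathsf T(h)$ sends $x\mapsto h(x)$ and $\delta_X(x)\mapsto\delta_Y(h(x))$ ($\delta$ the universal derivations). $\mathsf c_B:\mathsf T^2(B)\to\mathsf T^2(B)$ is the algebra map $b\mapsto b$, $\mathsf d(b)\mapsto\mathsf d'(b)$, $\mathsf d'(b)\mapsto\mathsf d(b)$, $\mathsf d'\mathsf d(b)\mapsto\mathsf d'\mathsf d(b)$. $\mathsf K_\nabla:\mathsf S_A(M)\to\mathsf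 T(\mathsf S_A(M))$ is the algebra map $a\mapsto a$, $m\mapsto\mathsf d(m)-\sum_im_i\,\mathsf d(a_i)$ where $\nabla(m)=\sum_i\mathsf d(a_i)\otimes m_i$ (and $\mathsf H_\nabla$ is the algebra map $a\mapsto a\otimes1$, $m\mapsto1\otimes m$, $\mathsf d(a)\mapsto\mathsf d(a)\otimes1$, $\mathsf d(m)\mapsto\nabla(m)$). Let $\Omega^2(A)=\Omega(A)\wedge_A\Omega(A)$. Every element of $\Omega(A)\otimes_AM$ can be written as $\sum_i\mathsf d(a_i)\otimes m_i$. The curvature of $\nabla$ is $\nabla^2:M\to\Omega^2(A)\otimes_AM$, $\nabla^2(m)=\sum_i\sum_j(\mathsf d(a_i)\wedge\mathsf d(a_{ij}))\otimes m_{ij}$ where $\nabla(m)=\sum_i\mathsf d(a_i)\otimes m_i$ and $\nabla(m_i)=\sum_j\mathsf d(a_{ij})\otimes m_{ij}$ (the composite $(\omega\otimes1)\circ(1\otimes\nabla)\circ\nabla$ with $\omega(\alpha\otimes\beta)=\alpha\wedge\beta$). For a vertical connection $\mathsf K:\mathsf S_A(M)\to\mathsf T(\mathsf S_A(M))$, its curvature is the algebra map $\mathsf C_{\mathsf K}:\mathsf S_A(M)\to\mathsf T^2(\mathsf S_A(M))$ with $\mathsf C_{\mathsf K}(a)=\mathsf c_{\mathsf S_A(M)}(\mathsf T(\mathsf K)(\mathsf K(a)))$ and $\mathsf C_{\mathsf K}(m)=\mathsf c_{\mathsf S_A(M)}(\mathsf T(\mathsf K)(\mathsf K(m)))-\mathsf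 T(\mathsf K)(\mathsf K(m))$; the connection is flat if $\mathsf C_{\mathsf K}(a)=a$ and $\mathsf C_{\mathsf K}(m)=0$ for all $a\in A$, $m\in M$. The map $\phi:\mathsf T^2(\mathsf S_A(M))\to\Omega^2(A)\otimes_AM$ is the additive map sending each monomial of the form $m\,\mathsf d(a)\mathsf d'(b)$ ($m\in M$, $a,b\in A$) to $(\mathsf d(a)\wedge\mathsf d(b))\otimes m$ and all monomials of other forms to $0$. *)

theory Defs
  imports Main "HOL.Modules" "HOL-Library.Poly_Mapping"
begin

type_synonym ('v, 'r) mp = "('v \<Rightarrow>\<^sub>0 nat) \<Rightarrow>\<^sub>0 'r"

definition Var :: "'v \<Rightarrow> ('v, 'r::comm_ring_1) mp" where
  "Var v = Poly_Mapping.single (Poly_Mapping.single v 1) 1"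

definition Const :: "'r::comm_ring_1 \<Rightarrow> ('v, 'r) mp" where
  "Const r = Poly_Mapping.single 0 r"

definition subst :: "('v \<Rightarrow> ('w, 'r::comm_ring_1) mp) \<Rightarrow> ('v, 'r) mp \<Rightarrow> ('w, 'r) mp" where
  "subst \<sigma> p = (\<Sum>mon\<in>Poly_Mapping.keys p. Const (Poly_Mapping.lookup p mon) *
      (\<Prod>v\<in>Poly_Mapping.keys (mon :: 'v \<Rightarrow>\<^sub>0 nat). \<sigma> v ^ Poly_Mapping.lookup mon v))"

definition pdiff :: "'v \<Rightarrow> ('v, 'r::comm_ring_1) mp \<Rightarrow> ('v, 'r) mp" where
  "pdiff v p = (\<Sum>mon\<in>Poly_Mapping.keys p.
      Poly_Mapping.single (mon - Poly_Mapping.single v 1) (of_nat (Poly_Mapping.lookup mon v) * Poly_Mapping.lookup p mon))"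

definition pvars :: "('v, 'r::comm_ring_1) mp \<Rightarrow> 'v set" where
  "pvars p = (\<Union>mon\<in>Poly_Mapping.keys p. Poly_Mapping.keys mon)"

text \<open>Inclusion B \<rightarrow> T(B) (variable v of B becomes generator Inl v) and the universal
  derivation d : B \<rightarrow> T(B) (d v = generator Inr v), on representatives.\<close>
definition Emb :: "('v, 'r::comm_ring_1) mp \<Rightarrow> ('v + 'v, 'r) mp" where
  "Emb p = subst (\<lambda>v. Var (Inl v)) p"

definition Der :: "('v, 'r::comm_ring_1) mp \<Rightarrow> ('v + 'v, 'r) mp" where
  "Der p = (\<Sum>v\<in>pvars p. Emb (pdiff v p) * Var (Inr v))"

inductive_set gen_subgroup :: "'g::ab_group_add set \<Rightarrow> 'g set" for G where
  zero: "0 \<in> gen_subgroup G"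
| add: "x \<in> G \<Longrightarrow> y \<in> gen_subgroup G \<Longrightarrow> y + x \<in> gen_subgroup G"
| diff: "x \<in> G \<Longrightarrow> y \<in> gen_subgroup G \<Longrightarrow> y - x \<in> gen_subgroup G"

definition gen_ideal :: "'g::comm_ring_1 set \<Rightarrow> 'g set" where
  "gen_ideal G = gen_subgroup {p * g | p g. g \<in> G}"

text \<open>For a presented algebra B = R[V]/J, T(B) = Sym_B(Omega(B)) = R[V + dV]/(J, dJ).\<close>
definition Tideal :: "('v, 'r::comm_ring_1) mp set \<Rightarrow> ('v + 'v, 'r) mp set" where
  "Tideal J = gen_ideal (Emb ` J \<union> Der ` J)"

text \<open>T(h) for the algebra map h = subst sigma : X \<rightarrow> T(Y)-style targets:
  x \<mapsto> h x, d x \<mapsto> d (h x).\<close>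
definition Tmap :: "('v \<Rightarrow> ('w, 'r::comm_ring_1) mp) \<Rightarrow> ('v + 'v, 'r) mp \<Rightarrow> ('w + 'w, 'r) mp" where
  "Tmap \<sigma> = subst (\<lambda>x. case x of Inl v \<Rightarrow> Emb (\<sigma> v) | Inr v \<Rightarrow> Der (\<sigma> v))"

text \<open>Generators of T^2(B): b = Inl (Inl b), d b = Inl (Inr b), d' b = Inr (Inl b),
  d'd b = Inr (Inr b).  The flip c_B swaps d and d'.\<close>
fun cflip :: "('v + 'v) + ('v + 'v) \<Rightarrow> ('v + 'v) + ('v + 'v)" where
  "cflip (Inl (Inl v)) = Inl (Inl v)"
| "cflip (Inl (Inr v)) = Inr (Inl v)"
| "cflip (Inr (Inl v)) = Inl (Inr v)"
| "cflip (Inr (Inr v)) = Inr (Inr v)"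

definition cmap :: "(('v + 'v) + ('v + 'v), 'r::comm_ring_1) mp \<Rightarrow> (('v + 'v) + ('v + 'v), 'r) mp" where
  "cmap = subst (\<lambda>x. Var (cflip x))"

section \<open>The symmetric algebra S_A(M) (generators Inl a for a in A, Inr m for m in M)\<close>

definition SA_rels :: "('r::comm_ring_1 \<Rightarrow> 'a::comm_ring_1) \<Rightarrow> ('a \<Rightarrow> 'm::ab_group_add \<Rightarrow> 'm)
    \<Rightarrow> ('a + 'm, 'r) mp set" where
  "SA_rels \<iota> smult =
     {Var (Inl (a + b)) - Var (Inl a) - Var (Inl b) | a b. True}
   \<union> {Var (Inl (a * b)) - Var (Inl a) * Var (Inl b) | a b. True}
   \<union> {Var (Inl 1) - 1}
   \<union> {Var (Inl (\<iota> r)) - Const r | r. True}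
   \<union> {Var (Inr (m + n)) - Var (Inr m) - Var (Inr n) | m n. True}
   \<union> {Var (Inr (smult a m)) - Var (Inl a) * Var (Inr m) | a m. True}"

definition SA_ideal where "SA_ideal \<iota> smult = gen_ideal (SA_rels \<iota> smult)"

definition T2_ideal where "T2_ideal \<iota> smult = Tideal (Tideal (SA_ideal \<iota> smult))"

text \<open>A representative of an element of Omega(A) \<otimes>_A M is a finite Z-combination of
  symbols (a, m) standing for d(a) \<otimes> m; similarly (a, b, m) stands for
  (d(a) \<and> d(b)) \<otimes> m in Omega^2(A) \<otimes>_A M.\<close>
definition OM1_rels :: "('r::comm_ring_1 \<Rightarrow> 'a::comm_ring_1) \<Rightarrow> ('a \<Rightarrow> 'm::ab_group_add \<Rightarrow> 'm)
    \<Rightarrow> (('a \<times> 'm) \<Rightarrow>\<^sub>0 int) set" where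
  "OM1_rels \<iota> smult =
     {Poly_Mapping.single (a + b, m) 1 - Poly_Mapping.single (a, m) 1 - Poly_Mapping.single (b, m) 1 | a b m. True}
   \<union> {Poly_Mapping.single (a, m + n) 1 - Poly_Mapping.single (a, m) 1 - Poly_Mapping.single (a, n) 1 | a m n. True}
   \<union> {Poly_Mapping.single (a * b, m) 1 - Poly_Mapping.single (a, smult b m) 1
        - Poly_Mapping.single (b, smult a m) 1 | a b m. True}
   \<union> {Poly_Mapping.single (\<iota> r, m) 1 | r m. True}"

definition OM1_eq where
  "OM1_eq \<iota> smult x y \<longleftrightarrow> x - y \<in> gen_subgroup (OM1_rels \<iota> smult)"

definition OM1_scale :: "('a \<Rightarrow> 'm \<Rightarrow> 'm) \<Rightarrow> 'a \<Rightarrow> (('a \<times> 'm) \<Rightarrow>\<^sub>0 int) \<Rightarrow> (('a \<times> 'm) \<Rightarrow>\<^sub>0 int)" where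
  "OM1_scale smult c x = (\<Sum>k\<in>Poly_Mapping.keys x. Poly_Mapping.single (fst k, smult c (snd k)) (Poly_Mapping.lookup x k))"

definition OM2_rels :: "('r::comm_ring_1 \<Rightarrow> 'a::comm_ring_1) \<Rightarrow> ('a \<Rightarrow> 'm::ab_group_add \<Rightarrow> 'm)
    \<Rightarrow> (('a \<times> 'a \<times> 'm) \<Rightarrow>\<^sub>0 int) set" where
  "OM2_rels \<iota> smult =
     {Poly_Mapping.single (a + a', b, m) 1 - Poly_Mapping.single (a, b, m) 1 - Poly_Mapping.single (a', b, m) 1 | a a' b m. True}
   \<union> {Poly_Mapping.single (a, b + b', m) 1 - Poly_Mapping.single (a, b, m) 1 - Poly_Mapping.single (a, b', m) 1 | a b b' m. True}
   \<union> {Poly_Mapping.single (a, b, m + n) 1 - Poly_Mapping.single (a, b, m) 1 - Poly_Mapping.single (a, b, n) 1 | a b m n. True}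
   \<union> {Poly_Mapping.single (a * c, b, m) 1 - Poly_Mapping.single (a, b, smult c m) 1
        - Poly_Mapping.single (c, b, smult a m) 1 | a b c m. True}
   \<union> {Poly_Mapping.single (a, b * c, m) 1 - Poly_Mapping.single (a, b, smult c m) 1
        - Poly_Mapping.single (a, c, smult b m) 1 | a b c m. True}
   \<union> {Poly_Mapping.single (\<iota> r, b, m) 1 | r b m. True}
   \<union> {Poly_Mapping.single (a, \<iota> r, m) 1 | a r m. True}
   \<union> {Poly_Mapping.single (a, a, m) 1 | a m. True}"

definition OM2_eq where
  "OM2_eq \<iota> smult x y \<longleftrightarrow> x - y \<in> gen_subgroup (OM2_rels \<iota> smult)"

definition OM2_scale :: "('a \<Rightarrow> 'm \<Rightarrow> 'm) \<Rightarrow> 'a \<Rightarrow> (('a \<times> 'a \<times> 'm) \<Rightarrow>\<^sub>0 int) \<Rightarrow> (('a \<times> 'a \<times> 'm) \<Rightarrow>\<^sub>0 int)" where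
  "OM2_scale smult c x =
     (\<Sum>k\<in>Poly_Mapping.keys x. Poly_Mapping.single (fst k, fst (snd k), smult c (snd (snd k))) (Poly_Mapping.lookup x k))"

text \<open>nabla m is a representative of nabla(m) = sum_i d(a_i) \<otimes> m_i.\<close>
definition module_connection ::
  "('r::comm_ring_1 \<Rightarrow> 'a::comm_ring_1) \<Rightarrow> ('a \<Rightarrow> 'm::ab_group_add \<Rightarrow> 'm) \<Rightarrow> ('m \<Rightarrow> (('a \<times> 'm) \<Rightarrow>\<^sub>0 int)) \<Rightarrow> bool" where
  "module_connection \<iota> smult nabla \<longleftrightarrow>
     (\<forall>m n. OM1_eq \<iota> smult (nabla (m + n)) (nabla m + nabla n)) \<and>
     (\<forall>r m. OM1_eq \<iota> smult (nabla (smult (\<iota> r) m)) (OM1_scale smult (\<iota> r) (nabla m))) \<and>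
     (\<forall>a m. OM1_eq \<iota> smult (nabla (smult a m))
              (OM1_scale smult a (nabla m) + Poly_Mapping.single (a, m) 1))"

definition curvature :: "('m \<Rightarrow> (('a \<times> 'm) \<Rightarrow>\<^sub>0 int)) \<Rightarrow> 'm \<Rightarrow> (('a \<times> 'a \<times> 'm) \<Rightarrow>\<^sub>0 int)" where
  "curvature nabla m =
     (\<Sum>x\<in>Poly_Mapping.keys (nabla m). \<Sum>y\<in>Poly_Mapping.keys (nabla (snd x)).
        Poly_Mapping.single (fst x, fst y, snd y) (Poly_Mapping.lookup (nabla m) x * Poly_Mapping.lookup (nabla (snd x)) y))"

text \<open>The vertical connection K_nabla : S_A(M) \<rightarrow> T(S_A(M)) on generators:
  a \<mapsto> a, m \<mapsto> d(m) - sum_i m_i d(a_i).\<close>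
fun Kgen :: "('m \<Rightarrow> (('a \<times> 'm) \<Rightarrow>\<^sub>0 int)) \<Rightarrow> 'a + 'm \<Rightarrow> (('a + 'm) + ('a + 'm), 'r::comm_ring_1) mp" where
  "Kgen nabla (Inl a) = Var (Inl (Inl a))"
| "Kgen nabla (Inr m) = Var (Inr (Inr m)) -
     (\<Sum>x\<in>Poly_Mapping.keys (nabla m). Const (of_int (Poly_Mapping.lookup (nabla m) x)) * Var (Inl (Inr (snd x))) * Var (Inr (Inl (fst x))))"

definition Kmap :: "('m \<Rightarrow> (('a \<times> 'm) \<Rightarrow>\<^sub>0 int)) \<Rightarrow> ('a + 'm, 'r::comm_ring_1) mp \<Rightarrow> (('a + 'm) + ('a + 'm), 'r) mp" where
  "Kmap nabla = subst (Kgen nabla)"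

definition CK_A :: "('m \<Rightarrow> (('a \<times> 'm) \<Rightarrow>\<^sub>0 int)) \<Rightarrow> 'a \<Rightarrow> ((('a + 'm) + ('a + 'm)) + (('a + 'm) + ('a + 'm)), 'r::comm_ring_1) mp" where
  "CK_A nabla a = cmap (Tmap (Kgen nabla) (Kmap nabla (Var (Inl a))))"

definition CK_M :: "('m \<Rightarrow> (('a \<times> 'm) \<Rightarrow>\<^sub>0 int)) \<Rightarrow> 'm \<Rightarrow> ((('a + 'm) + ('a + 'm)) + (('a + 'm) + ('a + 'm)), 'r::comm_ring_1) mp" where
  "CK_M nabla m = cmap (Tmap (Kgen nabla) (Kmap nabla (Var (Inr m))))
                  - Tmap (Kgen nabla) (Kmap nabla (Var (Inr m)))"

definition flat_conn :: "('r::comm_ring_1 \<Rightarrow> 'a::comm_ring_1) \<Rightarrow> ('a \<Rightarrow> 'm::ab_group_add \<Rightarrow> 'm)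
    \<Rightarrow> ('m \<Rightarrow> (('a \<times> 'm) \<Rightarrow>\<^sub>0 int)) \<Rightarrow> bool" where
  "flat_conn \<iota> smult nabla \<longleftrightarrow>
     (\<forall>a. (CK_A nabla a :: _ \<Rightarrow>\<^sub>0 'r) - Var (Inl (Inl (Inl a))) \<in> T2_ideal \<iota> smult) \<and>
     (\<forall>m. (CK_M nabla m :: _ \<Rightarrow>\<^sub>0 'r) \<in> T2_ideal \<iota> smult)"

text \<open>The monomial m d(a) d'(b).\<close>
definition mon3 :: "'m \<Rightarrow> 'a \<Rightarrow> 'a \<Rightarrow> ((('a + 'm) + ('a + 'm)) + (('a + 'm) + ('a + 'm))) \<Rightarrow>\<^sub>0 nat" where
  "mon3 m a b = Poly_Mapping.single (Inl (Inl (Inr m))) 1 + Poly_Mapping.single (Inl (Inr (Inl a))) 1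
              + Poly_Mapping.single (Inr (Inl (Inl b))) 1"

definition phi_mon :: "('r::comm_ring_1 \<Rightarrow> 'a) \<Rightarrow> ('a \<Rightarrow> 'm \<Rightarrow> 'm) \<Rightarrow> 'r
    \<Rightarrow> (((('a + 'm) + ('a + 'm)) + (('a + 'm) + ('a + 'm))) \<Rightarrow>\<^sub>0 nat) \<Rightarrow> (('a \<times> 'a \<times> 'm) \<Rightarrow>\<^sub>0 int)" where
  "phi_mon \<iota> smult r mon =
     (if \<exists>m a b. mon = mon3 m a b
      then (case THE (m, a, b). mon = mon3 m a b of
              (m, a, b) \<Rightarrow> Poly_Mapping.single (a, b, smult (\<iota> r) m) 1)
      else 0)"

definition phi :: "('r::comm_ring_1 \<Rightarrow> 'a) \<Rightarrow> ('a \<Rightarrow> 'm \<Rightarrow> 'm)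
    \<Rightarrow> ((('a + 'm) + ('a + 'm)) + (('a + 'm) + ('a + 'm)), 'r) mp \<Rightarrow> (('a \<times> 'a \<times> 'm) \<Rightarrow>\<^sub>0 int)" where
  "phi \<iota> smult p = (\<Sum>mon\<in>Poly_Mapping.keys p. phi_mon \<iota> smult (Poly_Mapping.lookup p mon) mon)"

end

theory Submission
  imports Defs
begin

text \<open>Write \<open>\<nabla> m = \<Sum>\<^sub>i d a\<^sub>i \<otimes> m\<^sub>i\<close>. Expanding \<open>T(K\<^sub>\<nabla>)(K\<^sub>\<nabla> m)\<close>, every term that is symmetric
  under the flip \<open>d \<leftrightarrow> d'\<close> cancels in \<open>C\<^sub>K(m)\<close>, leaving
  \<open>\<Sum>\<^sub>i\<^sub>j m\<^sub>i\<^sub>j (d a\<^sub>i d' a\<^sub>i\<^sub>j - d a\<^sub>i\<^sub>j d' a\<^sub>i)\<close>; \<open>\<phi>\<close> maps this to the antisymmetrisation of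
  \<open>\<nabla>\<^sup>2 m\<close>, which is \<open>2 \<nabla>\<^sup>2 m\<close> because \<open>d a \<and> d a = 0\<close>.

  For flatness, the lift \<open>(d a \<and> d b) \<otimes> m \<mapsto> m (d a d' b - d b d' a)\<close> respects the relations of
  \<open>\<Omega>\<^sup>2(A) \<otimes>\<^sub>A M\<close> and sends \<open>\<nabla>\<^sup>2 m\<close> to \<open>C\<^sub>K(m)\<close>, so \<open>\<nabla>\<^sup>2 = 0\<close> puts \<open>C\<^sub>K(m)\<close> into the ideal
  presenting \<open>T\<^sup>2(S\<^sub>A(M))\<close>. Conversely, the ring map from \<open>T\<^sup>2(S\<^sub>A(M))\<close> to a polynomial model
  over \<open>A\<close> that sends \<open>d m\<close> to \<open>\<nabla> m\<close> and \<open>d'd\<close> to \<open>0\<close> kills that ideal precisely because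
  \<open>\<nabla>\<close> is a connection, and reading off the coefficients of the monomials \<open>m d a d' b\<close>
  recovers \<open>2 \<nabla>\<^sup>2 m\<close> from the image of \<open>C\<^sub>K(m)\<close>.\<close>

lemma gen_subgroup_base: "x \<in> G \<Longrightarrow> x \<in> gen_subgroup G"
  using gen_subgroup.add[OF _ gen_subgroup.zero] by fastforce

lemma gen_subgroup_add:
  assumes "x \<in> gen_subgroup G" "y \<in> gen_subgroup G" shows "x + y \<in> gen_subgroup G"
  using assms(2)
proof (induction y rule: gen_subgroup.induct)
  case zero then show ?case using assms(1) by simp
next
  case (add g y) then show ?case using gen_subgroup.add[of g G "x + y"] by (simp add: add.assoc)
next
  case (diff g y) then show ?case using gen_subgroup.diff[of g G "x + y"] by (simp add: add_diff_eq)
qed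

lemma gen_subgroup_minus: "y \<in> gen_subgroup G \<Longrightarrow> - y \<in> gen_subgroup G"
proof (induction y rule: gen_subgroup.induct)
  case zero then show ?case by (simp add: gen_subgroup.zero)
next
  case (add g y) then show ?case using gen_subgroup.diff[of g G "- y"] by simp
next
  case (diff g y) then show ?case using gen_subgroup.add[of g G "- y"] by simp
qed

lemma gen_subgroup_diff: "x \<in> gen_subgroup G \<Longrightarrow> y \<in> gen_subgroup G \<Longrightarrow> x - y \<in> gen_subgroup G"
  using gen_subgroup_add[OF _ gen_subgroup_minus] by (metis diff_conv_add_uminus)

lemma gen_subgroup_sum: "(\<And>i. i \<in> S \<Longrightarrow> f i \<in> gen_subgroup G) \<Longrightarrow> sum f S \<in> gen_subgroup G"
  by (induction S rule: infinite_finite_induct) (auto intro: gen_subgroup_add gen_subgroup.zero)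

lemma gen_subgroup_frag_cmul: "x \<in> gen_subgroup G \<Longrightarrow> frag_cmul k x \<in> gen_subgroup G"
  by (rule frag_closure_minus_cmul) (auto intro: gen_subgroup_diff gen_subgroup.zero)

lemma gen_subgroup_hom:
  assumes additive: "\<And>x y. f (x + y) = f x + f y"
    and gens: "\<And>g. g \<in> G \<Longrightarrow> f g \<in> gen_subgroup H"
    and x: "x \<in> gen_subgroup G"
  shows "f x \<in> gen_subgroup H"
proof -
  have f_diff: "f (a - b) = f a - f b" for a b
    using additive[of "a - b" b] by (simp add: algebra_simps)
  from x show ?thesis
  proof (induction x rule: gen_subgroup.induct)
    case zero then show ?case using f_diff[of 0 0] by (simp add: gen_subgroup.zero)
  next
    case (add g y) then show ?case by (simp add: additive gen_subgroup_add gens)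
  next
    case (diff g y) then show ?case by (simp add: f_diff gen_subgroup_diff gens)
  qed
qed

definition is_ideal :: "'a::comm_ring_1 set \<Rightarrow> bool" where
  "is_ideal I \<longleftrightarrow> 0 \<in> I \<and> (\<forall>x\<in>I. \<forall>y\<in>I. x - y \<in> I) \<and> (\<forall>p. \<forall>x\<in>I. p * x \<in> I)"

lemma is_idealI:
  assumes "0 \<in> I" "\<And>x y. x \<in> I \<Longrightarrow> y \<in> I \<Longrightarrow> x - y \<in> I" "\<And>p x. x \<in> I \<Longrightarrow> p * x \<in> I"
  shows "is_ideal I"
  using assms by (simp add: is_ideal_def)

context
  fixes I :: "'a::comm_ring_1 set"
  assumes I: "is_ideal I"
begin

lemma ideal_zero: "0 \<in> I"
  using I by (simp add: is_ideal_def)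

lemma ideal_diff: "x \<in> I \<Longrightarrow> y \<in> I \<Longrightarrow> x - y \<in> I"
  using I by (simp add: is_ideal_def)

lemma ideal_mult_left: "x \<in> I \<Longrightarrow> p * x \<in> I"
  using I by (simp add: is_ideal_def)

lemma ideal_mult_right: "x \<in> I \<Longrightarrow> x * p \<in> I"
  using ideal_mult_left[of x p] by (simp add: mult.commute)

lemma ideal_minus: "x \<in> I \<Longrightarrow> - x \<in> I"
  using ideal_diff[OF ideal_zero] by simp

lemma ideal_add: "x \<in> I \<Longrightarrow> y \<in> I \<Longrightarrow> x + y \<in> I"
  using ideal_diff[OF _ ideal_minus] by simp

lemma ideal_sum: "(\<And>i. i \<in> S \<Longrightarrow> f i \<in> I) \<Longrightarrow> sum f S \<in> I"
  by (induction S rule: infinite_finite_induct) (auto intro: ideal_add ideal_zero)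

end

lemma gen_subgroup_image_in_ideal:
  assumes "is_ideal I" "\<And>x y. f (x + y) = f x + f y" "\<And>g. g \<in> G \<Longrightarrow> f g \<in> I"
    and "x \<in> gen_subgroup G"
  shows "f x \<in> I"
  using assms(4)
proof (induction x rule: gen_subgroup.induct)
  case zero
  then show ?case using assms(2)[of 0 0] by (simp add: ideal_zero[OF assms(1)])
next
  case (add g y)
  then show ?case by (simp add: assms(2,3) ideal_add[OF assms(1)])
next
  case (diff g y)
  have "f (y - g) = f y - f g"
    using assms(2)[of "y - g" g] by simp
  with diff show ?case by (simp add: assms(3) ideal_diff[OF assms(1)])
qed

lemma gen_ideal_base: "(g::'a::comm_ring_1) \<in> G \<Longrightarrow> g \<in> gen_ideal G"
  unfolding gen_ideal_def by (rule gen_subgroup_base) (metis (mono_tags, lifting) mem_Collect_eq mult_1)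

lemma is_ideal_gen_ideal: "is_ideal (gen_ideal G)"
proof (rule is_idealI)
  fix p x assume "x \<in> gen_ideal G"
  then show "p * x \<in> gen_ideal G"
    unfolding gen_ideal_def
  proof (rule gen_subgroup_hom[where f = "(*) p", rotated 2])
    fix g assume "g \<in> {q * g |q g. g \<in> G}"
    then obtain q h where "g = q * h" "h \<in> G" by blast
    then have "p * g = (p * q) * h" by (simp add: mult.assoc)
    with \<open>h \<in> G\<close> show "p * g \<in> gen_subgroup {q * g |q g. g \<in> G}" by (auto intro!: gen_subgroup_base)
  qed (simp add: distrib_left)
qed (simp_all add: gen_ideal_def gen_subgroup.zero gen_subgroup_diff)

lemma gen_ideal_least:
  assumes I: "is_ideal I" and G: "G \<subseteq> I"
  shows "gen_ideal G \<subseteq> I"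
proof
  fix x assume "x \<in> gen_ideal G"
  then have "x \<in> gen_subgroup {p * g |p g. g \<in> G}" by (simp add: gen_ideal_def)
  then show "x \<in> I"
    by (induction x rule: gen_subgroup.induct)
       (use G in \<open>auto intro: ideal_zero[OF I] ideal_add[OF I] ideal_diff[OF I] ideal_mult_left[OF I]\<close>)
qed

definition is_ring_hom :: "('a::comm_ring_1 \<Rightarrow> 'b::comm_ring_1) \<Rightarrow> bool" where
  "is_ring_hom f \<longleftrightarrow> (\<forall>x y. f (x + y) = f x + f y) \<and> (\<forall>x y. f (x * y) = f x * f y) \<and> f 1 = 1"

context
  fixes f :: "'a::comm_ring_1 \<Rightarrow> 'b::comm_ring_1"
  assumes f: "is_ring_hom f"
begin

lemma ring_hom_add: "f (x + y) = f x + f y"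
  using f by (simp add: is_ring_hom_def)

lemma ring_hom_mult: "f (x * y) = f x * f y"
  using f by (simp add: is_ring_hom_def)

lemma ring_hom_one: "f 1 = 1"
  using f by (simp add: is_ring_hom_def)

lemma ring_hom_zero: "f 0 = 0"
  using ring_hom_add[of 0 0] by simp

lemma ring_hom_minus: "f (- x) = - f x"
  using ring_hom_add[of x "- x"] by (simp add: ring_hom_zero eq_neg_iff_add_eq_0 add.commute)

lemma ring_hom_diff: "f (x - y) = f x - f y"
  using ring_hom_add[of x "- y"] by (simp add: ring_hom_minus)

lemma ring_hom_sum: "f (sum g S) = (\<Sum>i\<in>S. f (g i))"
  by (induction S rule: infinite_finite_induct) (simp_all add: ring_hom_add ring_hom_zero)

lemma ring_hom_of_int: "f (of_int k) = of_int k"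
  by (induction k rule: int_induct[where k = 0]) (simp_all add: ring_hom_zero ring_hom_add ring_hom_diff ring_hom_one)

lemma is_ideal_vimage: "is_ideal I \<Longrightarrow> is_ideal (f -` I)"
  by (rule is_idealI) (simp_all add: ring_hom_zero ring_hom_diff ring_hom_mult ideal_zero ideal_diff ideal_mult_left)

end

lemmas ring_hom_simps = ring_hom_add ring_hom_mult ring_hom_one ring_hom_zero ring_hom_minus
  ring_hom_diff ring_hom_sum

lemma is_ring_hom_comp: "is_ring_hom f \<Longrightarrow> is_ring_hom g \<Longrightarrow> is_ring_hom (g \<circ> f)"
  by (simp add: is_ring_hom_def)

lemma Const_add: "Const (a + b) = (Const a + Const b :: ('v, 'r::comm_ring_1) mp)"
  by (simp add: Const_def single_add)

lemma Const_mult: "Const (a * b) = (Const a * Const b :: ('v, 'r::comm_ring_1) mp)"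
  by (simp add: Const_def mult_single)

lemma Const_one [simp]: "Const 1 = (1 :: ('v, 'r::comm_ring_1) mp)"
  by (simp add: Const_def)

lemma Const_of_int: "Const (of_int k) = (of_int k :: ('v, 'r::comm_ring_1) mp)"
  by (simp add: Const_def)

lemma is_ring_hom_Const: "is_ring_hom (Const :: 'r::comm_ring_1 \<Rightarrow> ('v, 'r) mp)"
  by (simp add: is_ring_hom_def Const_add Const_mult)

lemma sum_single_lookup: "(\<Sum>k\<in>Poly_Mapping.keys p. Poly_Mapping.single k (Poly_Mapping.lookup p k)) = p"
  by (rule poly_mapping_eqI) (simp add: lookup_sum lookup_single when_def in_keys_iff)

lemma keys_add_nat:
  "Poly_Mapping.keys (m + n :: 'v \<Rightarrow>\<^sub>0 nat) = Poly_Mapping.keys m \<union> Poly_Mapping.keys n"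
  by (auto simp: in_keys_iff lookup_add)

lemma sum_keys_superset:
  assumes "finite S" "Poly_Mapping.keys p \<subseteq> S" "\<And>k. f k 0 = 0"
  shows "(\<Sum>k\<in>Poly_Mapping.keys p. f k (Poly_Mapping.lookup p k)) = (\<Sum>k\<in>S. f k (Poly_Mapping.lookup p k))"
  by (rule sum.mono_neutral_left) (use assms in \<open>auto simp: in_keys_iff\<close>)

lemma sum_keys_add:
  assumes "\<And>k. f k 0 = 0" "\<And>k a b. f k (a + b) = f k a + f k b"
  shows "(\<Sum>k\<in>Poly_Mapping.keys (p + q). f k (Poly_Mapping.lookup (p + q) k))
       = (\<Sum>k\<in>Poly_Mapping.keys p. f k (Poly_Mapping.lookup p k)) + (\<Sum>k\<in>Poly_Mapping.keys q. f k (Poly_Mapping.lookup q k))"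
proof -
  let ?S = "Poly_Mapping.keys p \<union> Poly_Mapping.keys q"
  have "Poly_Mapping.keys (p + q) \<subseteq> ?S" by (rule keys_add)
  then have "(\<Sum>k\<in>Poly_Mapping.keys (p + q). f k (Poly_Mapping.lookup (p + q) k))
      = (\<Sum>k\<in>?S. f k (Poly_Mapping.lookup (p + q) k))"
    using assms(1) by (intro sum_keys_superset) auto
  also have "\<dots> = (\<Sum>k\<in>?S. f k (Poly_Mapping.lookup p k) + f k (Poly_Mapping.lookup q k))"
    using assms(2) by (simp add: lookup_add)
  also have "\<dots> = (\<Sum>k\<in>Poly_Mapping.keys p. f k (Poly_Mapping.lookup p k)) + (\<Sum>k\<in>Poly_Mapping.keys q. f k (Poly_Mapping.lookup q k))"
    using assms by (simp add: sum.distrib sum_keys_superset[of ?S p] sum_keys_superset[of ?S q])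
  finally show ?thesis .
qed

definition mon_eval :: "('v \<Rightarrow> 'b::comm_ring_1) \<Rightarrow> ('v \<Rightarrow>\<^sub>0 nat) \<Rightarrow> 'b" where
  "mon_eval \<sigma> mon = (\<Prod>v\<in>Poly_Mapping.keys mon. \<sigma> v ^ Poly_Mapping.lookup mon v)"

definition peval :: "('r::comm_ring_1 \<Rightarrow> 'b::comm_ring_1) \<Rightarrow> ('v \<Rightarrow> 'b) \<Rightarrow> ('v, 'r) mp \<Rightarrow> 'b" where
  "peval \<phi> \<sigma> p = (\<Sum>mon\<in>Poly_Mapping.keys p. \<phi> (Poly_Mapping.lookup p mon) * mon_eval \<sigma> mon)"

lemma subst_eq_peval: "subst \<sigma> = peval Const \<sigma>"
  by (rule ext) (simp add: subst_def peval_def mon_eval_def)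

lemma mon_eval_superset:
  "finite S \<Longrightarrow> Poly_Mapping.keys mon \<subseteq> S \<Longrightarrow> mon_eval \<sigma> mon = (\<Prod>v\<in>S. \<sigma> v ^ Poly_Mapping.lookup mon v)"
  unfolding mon_eval_def by (rule prod.mono_neutral_left) (auto simp: in_keys_iff)

lemma mon_eval_add: "mon_eval \<sigma> (m + n) = mon_eval \<sigma> m * mon_eval \<sigma> n"
proof -
  let ?S = "Poly_Mapping.keys m \<union> Poly_Mapping.keys n"
  have "mon_eval \<sigma> (m + n) = (\<Prod>v\<in>?S. \<sigma> v ^ Poly_Mapping.lookup (m + n) v)"
    by (rule mon_eval_superset) (auto simp: keys_add_nat)
  also have "\<dots> = (\<Prod>v\<in>?S. \<sigma> v ^ Poly_Mapping.lookup m v) * (\<Prod>v\<in>?S. \<sigma> v ^ Poly_Mapping.lookup n v)"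
    by (simp add: lookup_add power_add prod.distrib)
  also have "\<dots> = mon_eval \<sigma> m * mon_eval \<sigma> n"
    by (simp add: mon_eval_superset[of ?S m] mon_eval_superset[of ?S n])
  finally show ?thesis .
qed

context
  fixes \<phi> :: "'r::comm_ring_1 \<Rightarrow> 'b::comm_ring_1"
  assumes \<phi>: "is_ring_hom \<phi>"
begin

lemma peval_add: "peval \<phi> \<sigma> (p + q) = peval \<phi> \<sigma> p + peval \<phi> \<sigma> q"
  unfolding peval_def
  by (rule sum_keys_add) (simp_all add: ring_hom_zero[OF \<phi>] ring_hom_add[OF \<phi>] distrib_right)

lemma peval_single: "peval \<phi> \<sigma> (Poly_Mapping.single mon c) = \<phi> c * mon_eval \<sigma> mon"
  by (simp add: peval_def ring_hom_zero[OF \<phi>])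

lemma peval_sum: "peval \<phi> \<sigma> (sum f S) = (\<Sum>i\<in>S. peval \<phi> \<sigma> (f i))"
  by (induction S rule: infinite_finite_induct) (simp_all add: peval_add, simp_all add: peval_def)

lemma peval_mult: "peval \<phi> \<sigma> (p * q) = peval \<phi> \<sigma> p * peval \<phi> \<sigma> q"
proof -
  have "p * q = (\<Sum>a\<in>Poly_Mapping.keys p. \<Sum>b\<in>Poly_Mapping.keys q.
      Poly_Mapping.single (a + b) (Poly_Mapping.lookup p a * Poly_Mapping.lookup q b))"
    by (subst (1 2) sum_single_lookup[symmetric])
       (simp add: sum_distrib_left sum_distrib_right mult_single sum.swap[of _ "Poly_Mapping.keys q"])
  then show ?thesis
    by (simp add: peval_sum peval_single ring_hom_mult[OF \<phi>] mon_eval_add peval_def[of _ _ p]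
        peval_def[of _ _ q] sum_product mult_ac)
qed

lemma peval_Const: "peval \<phi> \<sigma> (Const c) = \<phi> c"
  by (simp add: Const_def peval_single mon_eval_def)

lemma peval_Var: "peval \<phi> \<sigma> (Var v) = \<sigma> v"
  by (simp add: Var_def peval_single ring_hom_one[OF \<phi>] mon_eval_def)

lemma is_ring_hom_peval: "is_ring_hom (peval \<phi> \<sigma>)"
  using peval_Const[of \<sigma> 1] by (simp add: is_ring_hom_def peval_add peval_mult ring_hom_one[OF \<phi>])

end

lemma is_ring_hom_subst: "is_ring_hom (subst \<sigma>)"
  by (simp add: subst_eq_peval is_ring_hom_peval is_ring_hom_Const)

lemma subst_Const [simp]: "subst \<sigma> (Const c) = Const c"
  by (simp add: subst_eq_peval peval_Const is_ring_hom_Const)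

lemma subst_Var [simp]: "subst \<sigma> (Var v) = \<sigma> v"
  by (simp add: subst_eq_peval peval_Var is_ring_hom_Const)

lemmas subst_simps [simp] = ring_hom_simps[OF is_ring_hom_subst]

lemma pdiff_add: "pdiff v (p + q) = pdiff v p + pdiff v q"
  unfolding pdiff_def by (rule sum_keys_add) (simp_all add: distrib_left single_add)

lemma pdiff_sum: "pdiff v (sum f S) = (\<Sum>i\<in>S. pdiff v (f i))"
  by (induction S rule: infinite_finite_induct) (simp_all add: pdiff_add, simp_all add: pdiff_def)

lemma pdiff_single:
  "pdiff v (Poly_Mapping.single mon c) =
   Poly_Mapping.single (mon - Poly_Mapping.single v 1) (of_nat (Poly_Mapping.lookup mon v) * c)"
  by (simp add: pdiff_def)

text \<open>Truncated subtraction of the exponent is harmless here: the coefficient vanishes when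
  the variable does not occur.\<close>

lemma single_minus_add:
  "Poly_Mapping.single (a - Poly_Mapping.single v 1 + b) (of_nat (Poly_Mapping.lookup a v) * c :: 'r::comm_ring_1)
   = Poly_Mapping.single (a + b - Poly_Mapping.single v 1) (of_nat (Poly_Mapping.lookup a v) * c)"
proof (cases "Poly_Mapping.lookup a v = 0")
  case False
  then have "a - Poly_Mapping.single v 1 + b = a + b - Poly_Mapping.single v 1"
    by (intro poly_mapping_eqI) (auto simp: lookup_add lookup_minus lookup_single when_def)
  then show ?thesis by simp
qed simp

lemma pdiff_mult_single:
  "pdiff v (Poly_Mapping.single a c * Poly_Mapping.single b d :: ('v, 'r::comm_ring_1) mp) =
    pdiff v (Poly_Mapping.single a c) * Poly_Mapping.single b d +
    Poly_Mapping.single a c * pdiff v (Poly_Mapping.single b d)"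
proof -
  have "pdiff v (Poly_Mapping.single a c) * Poly_Mapping.single b d =
     Poly_Mapping.single (a + b - Poly_Mapping.single v 1) (of_nat (Poly_Mapping.lookup a v) * (c * d))"
    using single_minus_add[of a v b "c * d"] by (simp add: pdiff_single mult_single mult.assoc)
  moreover have "Poly_Mapping.single a c * pdiff v (Poly_Mapping.single b d) =
     Poly_Mapping.single (a + b - Poly_Mapping.single v 1) (of_nat (Poly_Mapping.lookup b v) * (c * d))"
    using single_minus_add[of b v a "c * d"] by (simp add: pdiff_single mult_single mult_ac add.commute)
  ultimately show ?thesis
    by (simp add: mult_single pdiff_single lookup_add single_add[symmetric] distrib_right)
qed

lemma pdiff_mult: "pdiff v (p * q) = pdiff v p * q + p * pdiff v (q :: ('v, 'r::comm_ring_1) mp)"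
proof -
  define P where "P a = Poly_Mapping.single a (Poly_Mapping.lookup p a)" for a
  define Q where "Q b = Poly_Mapping.single b (Poly_Mapping.lookup q b)" for b
  have pq: "p = sum P (Poly_Mapping.keys p)" "q = sum Q (Poly_Mapping.keys q)"
    by (simp_all add: P_def Q_def sum_single_lookup)
  have "pdiff v (sum P (Poly_Mapping.keys p) * sum Q (Poly_Mapping.keys q))
      = (\<Sum>a\<in>Poly_Mapping.keys p. \<Sum>b\<in>Poly_Mapping.keys q. pdiff v (P a) * Q b + P a * pdiff v (Q b))"
    by (simp add: sum_distrib_left sum_distrib_right pdiff_sum P_def Q_def pdiff_mult_single sum.swap[of _ "Poly_Mapping.keys q"])
  also have "\<dots> = pdiff v (sum P (Poly_Mapping.keys p)) * sum Q (Poly_Mapping.keys q)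
      + sum P (Poly_Mapping.keys p) * pdiff v (sum Q (Poly_Mapping.keys q))"
    by (simp add: pdiff_sum sum.distrib sum_distrib_left sum_distrib_right sum.swap[of _ "Poly_Mapping.keys q"])
  finally show ?thesis
    using pq by simp
qed

lemma pdiff_notin: "v \<notin> pvars p \<Longrightarrow> pdiff v p = 0"
  unfolding pdiff_def pvars_def by (rule sum.neutral) (auto simp: in_keys_iff)

lemma finite_pvars [simp]: "finite (pvars p)"
  by (simp add: pvars_def)

lemma pvars_add: "pvars (p + q) \<subseteq> pvars p \<union> pvars q"
  unfolding pvars_def using keys_add[of p q] by auto

lemma pvars_mult: "pvars (p * q) \<subseteq> pvars p \<union> pvars (q :: ('v, 'r::comm_ring_1) mp)"
  unfolding pvars_def using keys_mult[of p q] by (force simp: keys_add_nat)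

lemma is_ring_hom_Emb: "is_ring_hom Emb"
  using is_ring_hom_subst[of "\<lambda>v. Var (Inl v)"] by (simp add: Emb_def[abs_def])

lemmas Emb_simps [simp] = ring_hom_simps[OF is_ring_hom_Emb]

lemma Emb_Const [simp]: "Emb (Const c) = Const c"
  by (simp add: Emb_def)

lemma Emb_Var [simp]: "Emb (Var v) = Var (Inl v)"
  by (simp add: Emb_def)

lemma Der_superset:
  "finite V \<Longrightarrow> pvars p \<subseteq> V \<Longrightarrow> Der p = (\<Sum>v\<in>V. Emb (pdiff v p) * Var (Inr v))"
  unfolding Der_def by (rule sum.mono_neutral_left) (auto simp: pdiff_notin)

lemma Der_add [simp]: "Der (p + q) = Der p + Der q"
  using pvars_add[of p q]
  by (simp add: Der_superset[of "pvars p \<union> pvars q"] pdiff_add distrib_right sum.distrib)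

lemma Der_mult [simp]: "Der (p * q) = Emb p * Der q + Der p * Emb (q :: ('v, 'r::comm_ring_1) mp)"
  using pvars_mult[of p q]
  by (simp add: Der_superset[of "pvars p \<union> pvars q"] pdiff_mult sum_distrib_left sum.distrib[symmetric]
      algebra_simps)

lemma Der_zero [simp]: "Der 0 = 0"
  by (simp add: Der_def pvars_def)

lemma Der_minus [simp]: "Der (- p) = - Der p"
  using Der_add[of p "- p"] by (simp add: eq_neg_iff_add_eq_0 add.commute)

lemma Der_diff [simp]: "Der (p - q) = Der p - Der q"
  using Der_add[of p "- q"] by simp

lemma Der_sum [simp]: "Der (sum f S) = (\<Sum>i\<in>S. Der (f i))"
  by (induction S rule: infinite_finite_induct) (simp_all add: Der_add)

lemma Der_Const [simp]: "Der (Const c) = 0"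
  by (simp add: Der_def pvars_def Const_def)

lemma Der_one [simp]: "Der 1 = 0"
  using Der_Const[of 1] by simp

lemma Der_Var [simp]: "Der (Var v :: ('v, 'r::comm_ring_1) mp) = Var (Inr v)"
  using Der_superset[of "{v}" "Var v :: ('v, 'r) mp"] by (simp add: pvars_def Var_def pdiff_single)


definition cong_gen :: "'g::ab_group_add set \<Rightarrow> 'g \<Rightarrow> 'g \<Rightarrow> bool" where
  "cong_gen G x y \<longleftrightarrow> x - y \<in> gen_subgroup G"

context
  fixes G :: "'g::ab_group_add set"
begin

lemma cong_gen_refl [simp]: "cong_gen G x x"
  by (simp add: cong_gen_def gen_subgroup.zero)

lemma cong_gen_zero_base: "x \<in> G \<Longrightarrow> cong_gen G x 0"
  by (simp add: cong_gen_def gen_subgroup_base)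

lemma cong_gen_sym: "cong_gen G x y \<Longrightarrow> cong_gen G y x"
  unfolding cong_gen_def using gen_subgroup_minus[of "x - y"] by simp

lemma cong_gen_trans [trans]: "cong_gen G x y \<Longrightarrow> cong_gen G y z \<Longrightarrow> cong_gen G x z"
  unfolding cong_gen_def using gen_subgroup_add[of "x - y" G "y - z"] by simp

lemma cong_gen_add: "cong_gen G a b \<Longrightarrow> cong_gen G c d \<Longrightarrow> cong_gen G (a + c) (b + d)"
  unfolding cong_gen_def using gen_subgroup_add[of "a - b" G "c - d"] by (simp add: algebra_simps)

lemma cong_gen_diff: "cong_gen G a b \<Longrightarrow> cong_gen G c d \<Longrightarrow> cong_gen G (a - c) (b - d)"
  unfolding cong_gen_def using gen_subgroup_diff[of "a - b" G "c - d"] by (simp add: algebra_simps)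

lemma cong_gen_sum: "(\<And>i. i \<in> S \<Longrightarrow> cong_gen G (f i) (g i)) \<Longrightarrow> cong_gen G (sum f S) (sum g S)"
  unfolding cong_gen_def by (simp add: sum_subtractf[symmetric] gen_subgroup_sum)

lemma cong_gen_eq_add_iff: "cong_gen G x (y + z) \<longleftrightarrow> cong_gen G (x - y - z) 0"
  by (simp add: cong_gen_def diff_diff_eq)

end

lemma frag_cmul_diff_right: "frag_cmul k (a - b) = frag_cmul k a - frag_cmul k b"
  by (rule poly_mapping_eqI) (simp add: lookup_minus algebra_simps)

lemma cong_gen_frag_cmul:
  "cong_gen G a b \<Longrightarrow> cong_gen G (frag_cmul k a) (frag_cmul k b)"
  using gen_subgroup_frag_cmul[of "a - b" G k] by (simp add: cong_gen_def frag_cmul_diff_right)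

lemma cong_gen_hom:
  assumes "\<And>x y. f (x + y) = f x + f y" "\<And>g. g \<in> G \<Longrightarrow> cong_gen H (f g) 0" "cong_gen G x y"
  shows "cong_gen H (f x) (f y)"
proof -
  have "f (x - y) \<in> gen_subgroup H"
  proof (rule gen_subgroup_hom[where f = f])
    show "f g \<in> gen_subgroup H" if "g \<in> G" for g
      using assms(2)[OF that] by (simp add: cong_gen_def)
  qed (use assms in \<open>simp_all add: cong_gen_def\<close>)
  moreover have "f (x - y) = f x - f y"
    using assms(1)[of "x - y" y] by simp
  ultimately show ?thesis by (simp add: cong_gen_def)
qed

definition coeffwise :: "('k \<Rightarrow> 'c::zero \<Rightarrow> 'b::comm_monoid_add) \<Rightarrow> ('k \<Rightarrow>\<^sub>0 'c) \<Rightarrow> 'b" where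
  "coeffwise F p = (\<Sum>k\<in>Poly_Mapping.keys p. F k (Poly_Mapping.lookup p k))"

context
  fixes G :: "'g::ab_group_add set" and F :: "'k \<Rightarrow> 'c::ab_group_add \<Rightarrow> 'g"
  assumes F_zero: "\<And>k. cong_gen G (F k 0) 0"
    and F_add: "\<And>k a b. cong_gen G (F k (a + b)) (F k a + F k b)"
begin

lemma coeffwise_superset:
  assumes "finite S" "Poly_Mapping.keys p \<subseteq> S"
  shows "cong_gen G (coeffwise F p) (\<Sum>k\<in>S. F k (Poly_Mapping.lookup p k))"
proof -
  have "(\<Sum>k\<in>S. F k (Poly_Mapping.lookup p k))
      = coeffwise F p + (\<Sum>k\<in>S - Poly_Mapping.keys p. F k (Poly_Mapping.lookup p k))"
    unfolding coeffwise_def using sum.subset_diff[OF assms(2,1)] by (simp add: add.commute)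
  moreover have "cong_gen G (\<Sum>k\<in>S - Poly_Mapping.keys p. F k (Poly_Mapping.lookup p k)) 0"
    using cong_gen_sum[of "S - Poly_Mapping.keys p" G "\<lambda>k. F k (Poly_Mapping.lookup p k)" "\<lambda>_. 0"]
    by (simp add: in_keys_iff F_zero)
  then have "cong_gen G (coeffwise F p + (\<Sum>k\<in>S - Poly_Mapping.keys p. F k (Poly_Mapping.lookup p k))) (coeffwise F p + 0)"
    by (rule cong_gen_add[OF cong_gen_refl])
  ultimately show ?thesis
    by (simp add: cong_gen_sym)
qed

lemma coeffwise_add: "cong_gen G (coeffwise F (p + q)) (coeffwise F p + coeffwise F q)"
proof -
  let ?S = "Poly_Mapping.keys p \<union> Poly_Mapping.keys q"
  have "cong_gen G (coeffwise F (p + q)) (\<Sum>k\<in>?S. F k (Poly_Mapping.lookup (p + q) k))"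
    by (rule coeffwise_superset) (simp_all add: keys_add)
  also have "cong_gen G \<dots> (\<Sum>k\<in>?S. F k (Poly_Mapping.lookup p k) + F k (Poly_Mapping.lookup q k))"
    by (rule cong_gen_sum) (simp add: lookup_add F_add)
  also have "\<dots> = (\<Sum>k\<in>?S. F k (Poly_Mapping.lookup p k)) + (\<Sum>k\<in>?S. F k (Poly_Mapping.lookup q k))"
    by (rule sum.distrib)
  also have "cong_gen G \<dots> (coeffwise F p + coeffwise F q)"
    by (intro cong_gen_add cong_gen_sym[OF coeffwise_superset]) auto
  finally show ?thesis .
qed

lemma coeffwise_sum: "cong_gen G (coeffwise F (sum f S)) (\<Sum>i\<in>S. coeffwise F (f i))"
proof (induction S rule: infinite_finite_induct)
  case (insert x S)
  then show ?case
    using cong_gen_trans[OF coeffwise_add cong_gen_add[OF cong_gen_refl insert.IH]] by simp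
qed (simp_all add: coeffwise_def)

lemma coeffwise_single: "cong_gen G (coeffwise F (Poly_Mapping.single k c)) (F k c)"
  using coeffwise_superset[of "{k}" "Poly_Mapping.single k c"] by simp

lemma coeffwise_diff: "cong_gen G (coeffwise F (p - q)) (coeffwise F p - coeffwise F q)"
proof -
  have "coeffwise F p - (coeffwise F (p - q) + coeffwise F q) \<in> gen_subgroup G"
    using coeffwise_add[of "p - q" q] by (simp add: cong_gen_def)
  from gen_subgroup_minus[OF this] show ?thesis
    by (simp add: cong_gen_def algebra_simps)
qed

end

definition int_extend :: "('k \<Rightarrow> 'b::comm_ring_1) \<Rightarrow> ('k \<Rightarrow>\<^sub>0 int) \<Rightarrow> 'b" where
  "int_extend f x = (\<Sum>k\<in>Poly_Mapping.keys x. of_int (Poly_Mapping.lookup x k) * f k)"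

lemma int_extend_add: "int_extend f (x + y) = int_extend f x + int_extend f y"
  unfolding int_extend_def by (rule sum_keys_add) (simp_all add: distrib_right)

lemma int_extend_minus: "int_extend f (- x) = - int_extend f x"
  using int_extend_add[of f x "- x"] by (simp add: int_extend_def eq_neg_iff_add_eq_0 add.commute)

lemma int_extend_diff: "int_extend f (x - y) = int_extend f x - int_extend f y"
  using int_extend_add[of f x "- y"] by (simp add: int_extend_minus)

lemma int_extend_sum: "int_extend f (sum g S) = (\<Sum>i\<in>S. int_extend f (g i))"
  by (induction S rule: infinite_finite_induct) (simp_all add: int_extend_add, simp_all add: int_extend_def)

lemma int_extend_single: "int_extend f (Poly_Mapping.single k c) = of_int c * f k"
  by (simp add: int_extend_def)

lemmas int_extend_simps = int_extend_add int_extend_diff int_extend_sum int_extend_single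

section \<open>Representatives of \<open>\<Omega>\<^sup>2(A) \<otimes>\<^sub>A M\<close>\<close>

lemma OM2_eq_eq_cong_gen: "OM2_eq \<iota> smult = cong_gen (OM2_rels \<iota> smult)"
  by (intro ext) (simp add: OM2_eq_def cong_gen_def)

lemma frag_cmul_frag_of: "frag_cmul c (frag_of k) = Poly_Mapping.single k c"
  by (rule poly_mapping_eqI) (simp add: lookup_single when_def)

lemma OM2_scale_eq_frag_extend:
  "OM2_scale smult h = frag_extend (\<lambda>k. frag_of (fst k, fst (snd k), smult h (snd (snd k))))"
  by (intro ext) (simp add: OM2_scale_def frag_extend_def frag_cmul_frag_of)

locale algebra_module = module smult
  for \<iota> :: "'r::comm_ring_1 \<Rightarrow> 'a::comm_ring_1" and smult :: "'a \<Rightarrow> 'm::ab_group_add \<Rightarrow> 'm" +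
  assumes is_ring_hom_iota: "is_ring_hom \<iota>"
begin

abbreviation cong2 :: "(('a \<times> 'a \<times> 'm) \<Rightarrow>\<^sub>0 int) \<Rightarrow> _ \<Rightarrow> bool" where
  "cong2 \<equiv> cong_gen (OM2_rels \<iota> smult)"

abbreviation wedge :: "'a \<Rightarrow> 'a \<Rightarrow> 'm \<Rightarrow> ('a \<times> 'a \<times> 'm) \<Rightarrow>\<^sub>0 int" where
  "wedge a b m \<equiv> frag_of (a, b, m)"

lemma OM2_relsE:
  assumes "g \<in> OM2_rels \<iota> smult"
  obtains (add_left) a a' b m where "g = wedge (a + a') b m - wedge a b m - wedge a' b m"
    | (add_right) a b b' m where "g = wedge a (b + b') m - wedge a b m - wedge a b' m"
    | (add_module) a b m n where "g = wedge a b (m + n) - wedge a b m - wedge a b n"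
    | (mult_left) a b c m where "g = wedge (a * c) b m - wedge a b (smult c m) - wedge c b (smult a m)"
    | (mult_right) a b c m where "g = wedge a (b * c) m - wedge a b (smult c m) - wedge a c (smult b m)"
    | (iota_left) r b m where "g = wedge (\<iota> r) b m"
    | (iota_right) a r m where "g = wedge a (\<iota> r) m"
    | (alternating) a m where "g = wedge a a m"
  using assms unfolding OM2_rels_def
  apply -
  by (elim UnE CollectE exE conjE) blast+

lemma OM2_rels_intros:
  "wedge (a + a') b m - wedge a b m - wedge a' b m \<in> OM2_rels \<iota> smult"
  "wedge a (b + b') m - wedge a b m - wedge a b' m \<in> OM2_rels \<iota> smult"
  "wedge a b (m + n) - wedge a b m - wedge a b n \<in> OM2_rels \<iota> smult"
  "wedge (a * c) b m - wedge a b (smult c m) - wedge c b (smult a m) \<in> OM2_rels \<iota> smult"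
  "wedge a (b * c) m - wedge a b (smult c m) - wedge a c (smult b m) \<in> OM2_rels \<iota> smult"
  "wedge (\<iota> r) b m \<in> OM2_rels \<iota> smult"
  "wedge a (\<iota> r) m \<in> OM2_rels \<iota> smult"
  "wedge a a m \<in> OM2_rels \<iota> smult"
  unfolding OM2_rels_def by (simp_all only: Un_iff mem_Collect_eq) fast+

lemma wedge_add_left: "cong2 (wedge (a + a') b m) (wedge a b m + wedge a' b m)"
  unfolding cong_gen_eq_add_iff by (rule cong_gen_zero_base[OF OM2_rels_intros(1)])

lemma wedge_add_right: "cong2 (wedge a (b + b') m) (wedge a b m + wedge a b' m)"
  unfolding cong_gen_eq_add_iff by (rule cong_gen_zero_base[OF OM2_rels_intros(2)])

lemma wedge_add_module: "cong2 (wedge a b (m + n)) (wedge a b m + wedge a b n)"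
  unfolding cong_gen_eq_add_iff by (rule cong_gen_zero_base[OF OM2_rels_intros(3)])

lemma wedge_mult_left: "cong2 (wedge (a * c) b m) (wedge a b (smult c m) + wedge c b (smult a m))"
  unfolding cong_gen_eq_add_iff by (rule cong_gen_zero_base[OF OM2_rels_intros(4)])

lemma wedge_mult_right: "cong2 (wedge a (b * c) m) (wedge a b (smult c m) + wedge a c (smult b m))"
  unfolding cong_gen_eq_add_iff by (rule cong_gen_zero_base[OF OM2_rels_intros(5)])

lemma wedge_iota_left: "cong2 (wedge (\<iota> r) b m) 0"
  by (rule cong_gen_zero_base[OF OM2_rels_intros(6)])

lemma wedge_iota_right: "cong2 (wedge a (\<iota> r) m) 0"
  by (rule cong_gen_zero_base[OF OM2_rels_intros(7)])

lemma wedge_self: "cong2 (wedge a a m) 0"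
  by (rule cong_gen_zero_base[OF OM2_rels_intros(8)])

lemma wedge_zero_module: "cong2 (wedge a b 0) 0"
  using gen_subgroup_minus[OF wedge_add_module[of a b 0 0, unfolded cong_gen_def]] by (simp add: cong_gen_def)

lemma wedge_antisym: "cong2 (wedge a b m + wedge b a m) 0"
proof -
  have "cong2 (wedge (a + b) (a + b) m) ((wedge a a m + wedge a b m) + (wedge b a m + wedge b b m))"
    using cong_gen_trans[OF wedge_add_left cong_gen_add[OF wedge_add_right wedge_add_right]] .
  also have "cong2 \<dots> ((0 + wedge a b m) + (wedge b a m + 0))"
    by (intro cong_gen_add wedge_self cong_gen_refl)
  finally show ?thesis
    using wedge_self cong_gen_sym cong_gen_trans by fastforce
qed

lemma wedge_of_int_module: "cong2 (wedge a b (smult (of_int k) m)) (frag_cmul k (wedge a b m))"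
proof (induction k rule: int_induct[where k = 0])
  case base
  then show ?case by (simp add: wedge_zero_module)
next
  case (step1 i)
  have "cong2 (wedge a b (smult (of_int (i + 1)) m)) (wedge a b (smult (of_int i) m) + wedge a b m)"
    using wedge_add_module[of a b "smult (of_int i) m" m] by (simp add: scale_left_distrib)
  also have "cong2 \<dots> (frag_cmul i (wedge a b m) + wedge a b m)"
    by (intro cong_gen_add step1 cong_gen_refl)
  finally show ?case by (simp add: frag_cmul_distrib)
next
  case (step2 i)
  have "cong2 (wedge a b (smult (of_int i) m)) (wedge a b (smult (of_int (i - 1)) m) + wedge a b m)"
    using wedge_add_module[of a b "smult (of_int (i - 1)) m" m]
    by (metis scale_left_distrib scale_one diff_add_cancel of_int_diff of_int_1)
  from gen_subgroup_minus[OF this[unfolded cong_gen_def]]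
  have "cong2 (wedge a b (smult (of_int (i - 1)) m)) (wedge a b (smult (of_int i) m) - wedge a b m)"
    by (simp add: cong_gen_def algebra_simps)
  also have "cong2 \<dots> (frag_cmul i (wedge a b m) - wedge a b m)"
    by (intro cong_gen_diff step2 cong_gen_refl)
  finally show ?case
    by (simp add: frag_cmul_diff_distrib)
qed

lemma wedge_half:
  assumes "2 * h = 1"
  shows "cong2 (wedge a b m) (wedge a b (smult h m) - wedge b a (smult h m))"
proof -
  let ?n = "smult h m"
  have "cong2 (wedge b a ?n) (- wedge a b ?n)"
    using wedge_antisym[of a b ?n] by (simp add: cong_gen_def algebra_simps)
  then have "cong2 (wedge a b ?n - wedge b a ?n) (wedge a b ?n + wedge a b ?n)"
    using cong_gen_diff[OF cong_gen_refl] by fastforce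
  also have "cong2 \<dots> (wedge a b (?n + ?n))"
    by (rule cong_gen_sym[OF wedge_add_module])
  also have "?n + ?n = m"
    using assms by (simp add: scale_left_distrib[symmetric] mult_2[symmetric])
  finally show ?thesis
    by (rule cong_gen_sym)
qed

lemma OM2_scale_rel: "g \<in> OM2_rels \<iota> smult \<Longrightarrow> cong2 (OM2_scale smult h g) 0"
proof (induction rule: OM2_relsE)
  case (add_left a a' b m)
  then show ?case using wedge_add_left[of a a' b "smult h m"]
    by (simp add: OM2_scale_eq_frag_extend frag_extend_diff frag_extend_add cong_gen_eq_add_iff)
next
  case (add_right a b b' m)
  then show ?case using wedge_add_right[of a b b' "smult h m"]
    by (simp add: OM2_scale_eq_frag_extend frag_extend_diff frag_extend_add cong_gen_eq_add_iff)
next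
  case (add_module a b m n)
  then show ?case using wedge_add_module[of a b "smult h m" "smult h n"]
    by (simp add: OM2_scale_eq_frag_extend frag_extend_diff frag_extend_add cong_gen_eq_add_iff
        scale_right_distrib)
next
  case (mult_left a b c m)
  then show ?case using wedge_mult_left[of a c b "smult h m"]
    by (simp add: OM2_scale_eq_frag_extend frag_extend_diff frag_extend_add cong_gen_eq_add_iff mult.commute)
next
  case (mult_right a b c m)
  then show ?case using wedge_mult_right[of a b c "smult h m"]
    by (simp add: OM2_scale_eq_frag_extend frag_extend_diff frag_extend_add cong_gen_eq_add_iff mult.commute)
qed (simp_all add: OM2_scale_eq_frag_extend wedge_iota_left wedge_iota_right wedge_self)

lemma OM2_scale_cong: "cong2 x y \<Longrightarrow> cong2 (OM2_scale smult h x) (OM2_scale smult h y)"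
proof (rule cong_gen_hom[where f = "OM2_scale smult h"])
  show "OM2_scale smult h (x + y) = OM2_scale smult h x + OM2_scale smult h y" for x y
    by (simp add: OM2_scale_eq_frag_extend frag_extend_add)
qed (simp_all add: OM2_scale_rel)

end

section \<open>The curvature of \<open>K\<^sub>\<nabla>\<close>\<close>

abbreviation T2_a :: "'a \<Rightarrow> ((('a + 'm) + ('a + 'm)) + (('a + 'm) + ('a + 'm)), 'r::comm_ring_1) mp" where
  "T2_a a \<equiv> Var (Inl (Inl (Inl a)))"

abbreviation T2_m :: "'m \<Rightarrow> ((('a + 'm) + ('a + 'm)) + (('a + 'm) + ('a + 'm)), 'r::comm_ring_1) mp" where
  "T2_m m \<equiv> Var (Inl (Inl (Inr m)))"

abbreviation T2_da :: "'a \<Rightarrow> ((('a + 'm) + ('a + 'm)) + (('a + 'm) + ('a + 'm)), 'r::comm_ring_1) mp" where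
  "T2_da a \<equiv> Var (Inl (Inr (Inl a)))"

abbreviation T2_d'a :: "'a \<Rightarrow> ((('a + 'm) + ('a + 'm)) + (('a + 'm) + ('a + 'm)), 'r::comm_ring_1) mp" where
  "T2_d'a a \<equiv> Var (Inr (Inl (Inl a)))"

lemmas T2_map_defs = Tmap_def cmap_def Kmap_def

lemma CK_A_eq: "CK_A nabla a = (T2_a a :: _ \<Rightarrow>\<^sub>0 'r::comm_ring_1)"
  by (simp add: CK_A_def T2_map_defs)

lemma CK_M_eq:
  fixes nabla :: "'m \<Rightarrow> ('a \<times> 'm) \<Rightarrow>\<^sub>0 int"
  shows "(CK_M nabla m :: _ \<Rightarrow>\<^sub>0 'r::comm_ring_1) =
   (\<Sum>x\<in>Poly_Mapping.keys (nabla m). \<Sum>y\<in>Poly_Mapping.keys (nabla (snd x)).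
      Const (of_int (Poly_Mapping.lookup (nabla m) x * Poly_Mapping.lookup (nabla (snd x)) y)) * T2_m (snd y) *
      (T2_da (fst x) * T2_d'a (fst y) - T2_da (fst y) * T2_d'a (fst x)))"
proof -
  \<comment> \<open>\<open>C m x\<close> is the coefficient of \<open>d(fst x) \<otimes> snd x\<close> in \<open>\<nabla> m\<close>; \<open>S x\<close> and \<open>S' x\<close> are the two
     images of \<open>\<nabla> (snd x)\<close> in \<open>T\<^sup>2\<close>, using \<open>d\<close> and \<open>d'\<close> respectively.\<close>
  define C where "C m x = (Const (of_int (Poly_Mapping.lookup (nabla m) x)) :: ((('a + 'm) + ('a + 'm)) + (('a + 'm) + ('a + 'm)), 'r) mp)" for m x
  define S where "S x = (\<Sum>y\<in>Poly_Mapping.keys (nabla (snd x)). C (snd x) y * T2_m (snd y) * T2_da (fst y))" for x :: "'a \<times> 'm"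
  define S' where "S' x = (\<Sum>y\<in>Poly_Mapping.keys (nabla (snd x)). C (snd x) y * T2_m (snd y) * T2_d'a (fst y))" for x :: "'a \<times> 'm"
  let ?K = "Poly_Mapping.keys (nabla m)"
  have TK: "Tmap (Kgen nabla) (Kmap nabla (Var (Inr m))) =
      Var (Inr (Inr (Inr m))) -
      (\<Sum>x\<in>?K. C m x * (T2_m (snd x) * Var (Inr (Inr (Inl (fst x)))) +
                         Var (Inr (Inl (Inr (snd x)))) * T2_da (fst x))) -
      (\<Sum>x\<in>?K. C m x * (Var (Inl (Inr (Inr (snd x)))) - S x) * T2_d'a (fst x))"
    by (simp add: T2_map_defs C_def S_def mult_ac distrib_left)
  have cTK: "cmap (Tmap (Kgen nabla) (Kmap nabla (Var (Inr m)))) =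
      Var (Inr (Inr (Inr m))) -
      (\<Sum>x\<in>?K. C m x * (T2_m (snd x) * Var (Inr (Inr (Inl (fst x)))) +
                         Var (Inl (Inr (Inr (snd x)))) * T2_d'a (fst x))) -
      (\<Sum>x\<in>?K. C m x * (Var (Inr (Inl (Inr (snd x)))) - S' x) * T2_da (fst x))"
    unfolding TK by (simp add: cmap_def C_def S_def S'_def mult_ac)
  have "CK_M nabla m = (\<Sum>x\<in>?K. C m x * (S' x * T2_da (fst x) - S x * T2_d'a (fst x)))"
    unfolding CK_M_def by (subst cTK, subst TK) (simp add: sum_subtractf[symmetric] sum.distrib[symmetric] algebra_simps)
  then show ?thesis
    by (simp add: S_def S'_def C_def sum_distrib_left sum_distrib_right sum_subtractf[symmetric]
        Const_mult algebra_simps)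
qed

definition alt_curvature :: "('m \<Rightarrow> ('a \<times> 'm) \<Rightarrow>\<^sub>0 int) \<Rightarrow> 'm \<Rightarrow> ('a \<times> 'a \<times> 'm) \<Rightarrow>\<^sub>0 int" where
  "alt_curvature nabla m = (\<Sum>x\<in>Poly_Mapping.keys (nabla m). \<Sum>y\<in>Poly_Mapping.keys (nabla (snd x)).
     frag_cmul (Poly_Mapping.lookup (nabla m) x * Poly_Mapping.lookup (nabla (snd x)) y)
       (frag_of (fst x, fst y, snd y) - frag_of (fst y, fst x, snd y)))"

lemma mon3_eq_iff: "mon3 m a b = mon3 m' a' b' \<longleftrightarrow> m = m' \<and> a = a' \<and> b = b'"
proof
  assume eq: "mon3 m a b = mon3 m' a' b'"
  have "Poly_Mapping.lookup (mon3 m a b) (Inl (Inl (Inr m))) = 1"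
    "Poly_Mapping.lookup (mon3 m a b) (Inl (Inr (Inl a))) = 1"
    "Poly_Mapping.lookup (mon3 m a b) (Inr (Inl (Inl b))) = 1"
    by (simp_all add: mon3_def lookup_add lookup_single)
  then show "m = m' \<and> a = a' \<and> b = b'"
    unfolding eq by (auto simp: mon3_def lookup_add lookup_single when_def split: if_splits)
qed simp

lemma mon3_poly:
  "Const r * (T2_m m * (T2_da a * T2_d'a b)) = (Poly_Mapping.single (mon3 m a b) r :: _ \<Rightarrow>\<^sub>0 'r::comm_ring_1)"
  by (simp add: Const_def Var_def mult_single mon3_def add.assoc)

context algebra_module
begin

lemma phi_mon_mon3: "phi_mon \<iota> smult r (mon3 m a b) = wedge a b (smult (\<iota> r) m)"
proof -
  have "(THE (m', a', b'). mon3 m a b = mon3 m' a' b') = (m, a, b)"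
    by (rule the_equality) (auto simp: mon3_eq_iff)
  then show ?thesis by (auto simp: phi_mon_def)
qed

lemma phi_mon_zero: "cong2 (phi_mon \<iota> smult 0 mon) 0"
  by (cases "\<exists>m a b. mon = mon3 m a b")
     (auto simp: phi_mon_mon3 ring_hom_zero[OF is_ring_hom_iota] wedge_zero_module, simp add: phi_mon_def)

lemma phi_mon_add: "cong2 (phi_mon \<iota> smult (r + s) mon) (phi_mon \<iota> smult r mon + phi_mon \<iota> smult s mon)"
  by (cases "\<exists>m a b. mon = mon3 m a b")
     (auto simp: phi_mon_mon3 ring_hom_add[OF is_ring_hom_iota] scale_left_distrib wedge_add_module,
      simp add: phi_mon_def)

lemma phi_eq_coeffwise: "phi \<iota> smult = coeffwise (\<lambda>mon r. phi_mon \<iota> smult r mon)"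
  by (intro ext) (simp add: phi_def coeffwise_def)

lemmas phi_diff = coeffwise_diff[where F = "\<lambda>mon r. phi_mon \<iota> smult r mon", OF phi_mon_zero phi_mon_add,
  folded phi_eq_coeffwise]
lemmas phi_sum = coeffwise_sum[where F = "\<lambda>mon r. phi_mon \<iota> smult r mon", OF phi_mon_zero phi_mon_add,
  folded phi_eq_coeffwise]
lemmas phi_single = coeffwise_single[where F = "\<lambda>mon r. phi_mon \<iota> smult r mon", OF phi_mon_zero phi_mon_add,
  folded phi_eq_coeffwise]

lemma wedge_of_int: "cong2 (wedge a b (smult (\<iota> (of_int k)) m)) (frag_cmul k (wedge a b m))"
  unfolding ring_hom_of_int[OF is_ring_hom_iota] by (rule wedge_of_int_module)

lemma phi_CK_M_term:
  "cong2 (phi \<iota> smult (Const (of_int k) * T2_m m * (T2_da a * T2_d'a b - T2_da b * T2_d'a a) :: (_, 'r) mp))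
     (frag_cmul k (wedge a b m - wedge b a m))"
proof -
  have eq: "(Const (of_int k) * T2_m m * (T2_da a * T2_d'a b - T2_da b * T2_d'a a) :: (_, 'r) mp)
      = Poly_Mapping.single (mon3 m a b) (of_int k) - Poly_Mapping.single (mon3 m b a) (of_int k)"
    by (simp add: right_diff_distrib mult.assoc mon3_poly)
  have "cong2 (phi \<iota> smult (Poly_Mapping.single (mon3 m a b) (of_int k) - Poly_Mapping.single (mon3 m b a) (of_int k)))
      (phi_mon \<iota> smult (of_int k) (mon3 m a b) - phi_mon \<iota> smult (of_int k) (mon3 m b a))"
    by (rule cong_gen_trans[OF phi_diff cong_gen_diff[OF phi_single phi_single]])
  then have "cong2 (phi \<iota> smult (Const (of_int k) * T2_m m * (T2_da a * T2_d'a b - T2_da b * T2_d'a a) :: (_, 'r) mp))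
      (wedge a b (smult (\<iota> (of_int k)) m) - wedge b a (smult (\<iota> (of_int k)) m))"
    by (simp only: eq phi_mon_mon3)
  also have "cong2 \<dots> (frag_cmul k (wedge a b m) - frag_cmul k (wedge b a m))"
    by (intro cong_gen_diff wedge_of_int)
  finally show ?thesis
    by (simp add: frag_cmul_diff_right)
qed

lemma phi_CK_M: "cong2 (phi \<iota> smult (CK_M nabla m :: _ \<Rightarrow>\<^sub>0 'r)) (alt_curvature nabla m)"
  unfolding CK_M_eq alt_curvature_def
  by (intro cong_gen_trans[OF phi_sum] cong_gen_sum phi_CK_M_term)

lemma curvature_cong_alt_curvature:
  assumes "2 * h = 1"
  shows "cong2 (curvature nabla m) (OM2_scale smult h (alt_curvature nabla m))"
proof -
  have "curvature nabla m = (\<Sum>x\<in>Poly_Mapping.keys (nabla m). \<Sum>y\<in>Poly_Mapping.keys (nabla (snd x)).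
     frag_cmul (Poly_Mapping.lookup (nabla m) x * Poly_Mapping.lookup (nabla (snd x)) y) (wedge (fst x) (fst y) (snd y)))"
    by (simp add: curvature_def frag_cmul_frag_of)
  moreover have "OM2_scale smult h (alt_curvature nabla m) = (\<Sum>x\<in>Poly_Mapping.keys (nabla m). \<Sum>y\<in>Poly_Mapping.keys (nabla (snd x)).
     frag_cmul (Poly_Mapping.lookup (nabla m) x * Poly_Mapping.lookup (nabla (snd x)) y)
       (wedge (fst x) (fst y) (smult h (snd y)) - wedge (fst y) (fst x) (smult h (snd y))))"
    by (simp add: alt_curvature_def OM2_scale_eq_frag_extend frag_extend_sum frag_extend_cmul frag_extend_diff)
  ultimately show ?thesis
    by (simp only:) (intro cong_gen_sum cong_gen_frag_cmul wedge_half[OF assms])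
qed

theorem curvature_cong_phi_CK_M:
  assumes "2 * h = 1"
  shows "cong2 (curvature nabla m) (OM2_scale smult h (phi \<iota> smult (CK_M nabla m :: _ \<Rightarrow>\<^sub>0 'r)))"
  using cong_gen_trans[OF curvature_cong_alt_curvature[OF assms] OM2_scale_cong[OF cong_gen_sym[OF phi_CK_M]]] .

end

section \<open>Flat curvature gives a flat vertical connection\<close>

definition form_to_T2 :: "(('a \<times> 'a \<times> 'm) \<Rightarrow>\<^sub>0 int) \<Rightarrow> ((('a + 'm) + ('a + 'm)) + (('a + 'm) + ('a + 'm)), 'r::comm_ring_1) mp" where
  "form_to_T2 = int_extend (\<lambda>(a, b, m). T2_m m * (T2_da a * T2_d'a b - T2_da b * T2_d'a a))"

lemma form_to_T2_add: "form_to_T2 (x + y) = form_to_T2 x + form_to_T2 y"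
  by (simp add: form_to_T2_def int_extend_add)

lemma form_to_T2_curvature: "form_to_T2 (curvature nabla m) = (CK_M nabla m :: _ \<Rightarrow>\<^sub>0 'r::comm_ring_1)"
  by (simp add: curvature_def CK_M_eq form_to_T2_def int_extend_sum int_extend_single Const_mult Const_of_int
      case_prod_beta mult.assoc)

lemma is_ideal_Tideal: "is_ideal (Tideal J)"
  by (simp add: Tideal_def is_ideal_gen_ideal)

lemma Tideal_base: "j \<in> J \<Longrightarrow> Emb j \<in> Tideal J \<and> Der j \<in> Tideal J"
  by (auto simp: Tideal_def intro!: gen_ideal_base)

context algebra_module
begin

abbreviation T2 :: "((('a + 'm) + ('a + 'm)) + (('a + 'm) + ('a + 'm)), 'r) mp set" where
  "T2 \<equiv> T2_ideal \<iota> smult"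

lemma SA_rels_mem:
  "Var (Inl (a + b)) - Var (Inl a) - Var (Inl b) \<in> SA_rels \<iota> smult"
  "Var (Inl (a * b)) - Var (Inl a) * Var (Inl b) \<in> SA_rels \<iota> smult"
  "Var (Inl (\<iota> r)) - Const r \<in> SA_rels \<iota> smult"
  "Var (Inr (m + n)) - Var (Inr m) - Var (Inr n) \<in> SA_rels \<iota> smult"
  "Var (Inr (smult a m)) - Var (Inl a) * Var (Inr m) \<in> SA_rels \<iota> smult"
  unfolding SA_rels_def by blast+

lemma T2_ideal_rel:
  assumes "j \<in> SA_rels \<iota> smult"
  shows "Emb (Emb j) \<in> T2" "Emb (Der j) \<in> T2" "Der (Emb j) \<in> T2" "Der (Der j) \<in> T2"
proof -
  have "j \<in> SA_ideal \<iota> smult"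
    unfolding SA_ideal_def by (rule gen_ideal_base[OF assms])
  then have "Emb j \<in> Tideal (SA_ideal \<iota> smult)" "Der j \<in> Tideal (SA_ideal \<iota> smult)"
    by (simp_all add: Tideal_base)
  then show "Emb (Emb j) \<in> T2" "Emb (Der j) \<in> T2" "Der (Emb j) \<in> T2" "Der (Der j) \<in> T2"
    by (simp_all add: T2_ideal_def Tideal_base)
qed

lemma T2_ideal_gens:
  "T2_da (a + b) - T2_da a - T2_da b \<in> T2"
  "T2_d'a (a + b) - T2_d'a a - T2_d'a b \<in> T2"
  "T2_da (a * b) - (T2_a a * T2_da b + T2_da a * T2_a b) \<in> T2"
  "T2_d'a (a * b) - (T2_a a * T2_d'a b + T2_d'a a * T2_a b) \<in> T2"
  "T2_m (m + n) - T2_m m - T2_m n \<in> T2"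
  "T2_m (smult a m) - T2_a a * T2_m m \<in> T2"
  "T2_da (\<iota> r) \<in> T2"
  "T2_d'a (\<iota> r) \<in> T2"
  using T2_ideal_rel(2)[OF SA_rels_mem(1)[of a b]] T2_ideal_rel(3)[OF SA_rels_mem(1)[of a b]]
    T2_ideal_rel(2)[OF SA_rels_mem(2)[of a b]] T2_ideal_rel(3)[OF SA_rels_mem(2)[of a b]]
    T2_ideal_rel(1)[OF SA_rels_mem(4)[of m n]] T2_ideal_rel(1)[OF SA_rels_mem(5)[of a m]]
    T2_ideal_rel(2)[OF SA_rels_mem(3)[of r]] T2_ideal_rel(3)[OF SA_rels_mem(3)[of r]]
  by (simp_all add: T2_map_defs)

lemma is_ideal_T2: "is_ideal T2"
  by (simp add: T2_ideal_def is_ideal_Tideal)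

lemmas T2_closed = ideal_add[OF is_ideal_T2] ideal_diff[OF is_ideal_T2] ideal_minus[OF is_ideal_T2]
  ideal_mult_left[OF is_ideal_T2] ideal_zero[OF is_ideal_T2]

lemma form_to_T2_additive_rels:
  "form_to_T2 (wedge (a + a') b m - wedge a b m - wedge a' b m) \<in> T2"
  "form_to_T2 (wedge a (b + b') m - wedge a b m - wedge a b' m) \<in> T2"
  "form_to_T2 (wedge a b (m + n) - wedge a b m - wedge a b n) \<in> T2"
proof -
  have "(form_to_T2 (wedge (a + a') b m - wedge a b m - wedge a' b m) :: (_, 'r) mp)
      = T2_m m * T2_d'a b * (T2_da (a + a') - T2_da a - T2_da a')
        - T2_m m * T2_da b * (T2_d'a (a + a') - T2_d'a a - T2_d'a a')"
    by (simp add: form_to_T2_def int_extend_simps algebra_simps)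
  then show "form_to_T2 (wedge (a + a') b m - wedge a b m - wedge a' b m) \<in> T2"
    by (simp only:) (intro T2_ideal_gens T2_closed)
  have "(form_to_T2 (wedge a (b + b') m - wedge a b m - wedge a b' m) :: (_, 'r) mp)
      = T2_m m * T2_da a * (T2_d'a (b + b') - T2_d'a b - T2_d'a b')
        - T2_m m * T2_d'a a * (T2_da (b + b') - T2_da b - T2_da b')"
    by (simp add: form_to_T2_def int_extend_simps algebra_simps)
  then show "form_to_T2 (wedge a (b + b') m - wedge a b m - wedge a b' m) \<in> T2"
    by (simp only:) (intro T2_ideal_gens T2_closed)
  have "(form_to_T2 (wedge a b (m + n) - wedge a b m - wedge a b n) :: (_, 'r) mp)
      = (T2_da a * T2_d'a b - T2_da b * T2_d'a a) * (T2_m (m + n) - T2_m m - T2_m n)"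
    by (simp add: form_to_T2_def int_extend_simps algebra_simps)
  then show "form_to_T2 (wedge a b (m + n) - wedge a b m - wedge a b n) \<in> T2"
    by (simp only:) (intro T2_ideal_gens T2_closed)
qed

lemma form_to_T2_Leibniz_rels:
  "form_to_T2 (wedge (a * c) b m - wedge a b (smult c m) - wedge c b (smult a m)) \<in> T2"
  "form_to_T2 (wedge a (b * c) m - wedge a b (smult c m) - wedge a c (smult b m)) \<in> T2"
proof -
  have "(form_to_T2 (wedge (a * c) b m - wedge a b (smult c m) - wedge c b (smult a m)) :: (_, 'r) mp) =
      T2_m m * T2_d'a b * (T2_da (a * c) - (T2_a a * T2_da c + T2_da a * T2_a c))
      - T2_m m * T2_da b * (T2_d'a (a * c) - (T2_a a * T2_d'a c + T2_d'a a * T2_a c))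
      - (T2_da a * T2_d'a b - T2_da b * T2_d'a a) * (T2_m (smult c m) - T2_a c * T2_m m)
      - (T2_da c * T2_d'a b - T2_da b * T2_d'a c) * (T2_m (smult a m) - T2_a a * T2_m m)"
    by (simp add: form_to_T2_def int_extend_simps algebra_simps)
  then show "form_to_T2 (wedge (a * c) b m - wedge a b (smult c m) - wedge c b (smult a m)) \<in> T2"
    by (simp only:) (intro T2_ideal_gens T2_closed)
  have "(form_to_T2 (wedge a (b * c) m - wedge a b (smult c m) - wedge a c (smult b m)) :: (_, 'r) mp) =
      T2_m m * T2_da a * (T2_d'a (b * c) - (T2_a b * T2_d'a c + T2_d'a b * T2_a c))
      - T2_m m * T2_d'a a * (T2_da (b * c) - (T2_a b * T2_da c + T2_da b * T2_a c))
      - (T2_da a * T2_d'a b - T2_da b * T2_d'a a) * (T2_m (smult c m) - T2_a c * T2_m m)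
      - (T2_da a * T2_d'a c - T2_da c * T2_d'a a) * (T2_m (smult b m) - T2_a b * T2_m m)"
    by (simp add: form_to_T2_def int_extend_simps algebra_simps)
  then show "form_to_T2 (wedge a (b * c) m - wedge a b (smult c m) - wedge a c (smult b m)) \<in> T2"
    by (simp only:) (intro T2_ideal_gens T2_closed)
qed

lemma form_to_T2_rel: "g \<in> OM2_rels \<iota> smult \<Longrightarrow> form_to_T2 g \<in> T2"
proof (induction rule: OM2_relsE)
  case (iota_left r b m)
  have "(form_to_T2 g :: (_, 'r) mp) = T2_m m * T2_d'a b * T2_da (\<iota> r) - T2_m m * T2_da b * T2_d'a (\<iota> r)"
    by (simp add: iota_left form_to_T2_def int_extend_simps algebra_simps)
  then show ?case by (simp only:) (intro T2_ideal_gens T2_closed)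
next
  case (iota_right a r m)
  have "(form_to_T2 g :: (_, 'r) mp) = T2_m m * T2_da a * T2_d'a (\<iota> r) - T2_m m * T2_d'a a * T2_da (\<iota> r)"
    by (simp add: iota_right form_to_T2_def int_extend_simps algebra_simps)
  then show ?case by (simp only:) (intro T2_ideal_gens T2_closed)
next
  case (alternating a m)
  then show ?case by (simp add: form_to_T2_def int_extend_simps T2_closed)
qed (simp_all add: form_to_T2_additive_rels form_to_T2_Leibniz_rels)

lemma CK_M_in_T2_if_curvature_cong_zero:
  assumes "cong2 (curvature nabla m) 0"
  shows "(CK_M nabla m :: (_, 'r) mp) \<in> T2"
proof -
  have "form_to_T2 (curvature nabla m) \<in> T2"
    by (rule gen_subgroup_image_in_ideal[OF is_ideal_T2 form_to_T2_add form_to_T2_rel])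
       (use assms in \<open>simp_all add: cong_gen_def\<close>)
  then show ?thesis
    by (simp add: form_to_T2_curvature)
qed

end

section \<open>A polynomial model of \<open>\<Omega>\<^sup>2(A) \<otimes>\<^sub>A M\<close>\<close>

text \<open>Polynomials over \<open>A\<close> in variables \<open>X\<^sub>m\<close>, \<open>E\<^sub>a\<close>, \<open>E'\<^sub>a\<close>; modulo the ideal \<open>QGens\<close> below, the
  monomial \<open>c X\<^sub>m E\<^sub>a E'\<^sub>b\<close> plays the role of \<open>(d a \<and> d b) \<otimes> c m\<close>.\<close>

type_synonym ('a, 'm) qvar = "'m + ('a + 'a)"

abbreviation QX :: "'m \<Rightarrow> (('a, 'm) qvar, 'a::comm_ring_1) mp" where "QX m \<equiv> Var (Inl m)"
abbreviation QE :: "'a \<Rightarrow> (('a, 'm) qvar, 'a::comm_ring_1) mp" where "QE a \<equiv> Var (Inr (Inl a))"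
abbreviation QE' :: "'a \<Rightarrow> (('a, 'm) qvar, 'a::comm_ring_1) mp" where "QE' a \<equiv> Var (Inr (Inr a))"

abbreviation xX :: "'m \<Rightarrow> ('a, 'm) qvar \<Rightarrow>\<^sub>0 nat" where "xX m \<equiv> Poly_Mapping.single (Inl m) 1"
abbreviation xE :: "'a \<Rightarrow> ('a, 'm) qvar \<Rightarrow>\<^sub>0 nat" where "xE a \<equiv> Poly_Mapping.single (Inr (Inl a)) 1"
abbreviation xE' :: "'a \<Rightarrow> ('a, 'm) qvar \<Rightarrow>\<^sub>0 nat" where "xE' a \<equiv> Poly_Mapping.single (Inr (Inr a)) 1"

definition qmon3 :: "'m \<Rightarrow> 'a \<Rightarrow> 'a \<Rightarrow> ('a, 'm) qvar \<Rightarrow>\<^sub>0 nat" where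
  "qmon3 m a b = xX m + xE a + xE' b"

lemma add_single_eq_iff:
  "\<alpha> + Poly_Mapping.single v 1 = \<beta> \<longleftrightarrow> 0 < Poly_Mapping.lookup \<beta> v \<and> \<alpha> = \<beta> - Poly_Mapping.single v (1::nat)"
proof
  assume eq: "\<alpha> + Poly_Mapping.single v 1 = \<beta>"
  then show "0 < Poly_Mapping.lookup \<beta> v \<and> \<alpha> = \<beta> - Poly_Mapping.single v 1"
    by (auto simp: lookup_add intro!: poly_mapping_eqI simp: lookup_minus)
next
  assume "0 < Poly_Mapping.lookup \<beta> v \<and> \<alpha> = \<beta> - Poly_Mapping.single v 1"
  then show "\<alpha> + Poly_Mapping.single v 1 = \<beta>"
    by (auto intro!: poly_mapping_eqI simp: lookup_add lookup_minus lookup_single when_def)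
qed

lemma add_eq_qmon3_iff:
  "\<alpha> + Poly_Mapping.single v 1 = qmon3 m a b \<longleftrightarrow>
     v = Inl m \<and> \<alpha> = xE a + xE' b \<or> v = Inr (Inl a) \<and> \<alpha> = xX m + xE' b \<or> v = Inr (Inr b) \<and> \<alpha> = xX m + xE a"
  unfolding add_single_eq_iff
  by (cases v rule: sum.exhaust[case_product sum.exhaust])
     (auto simp: qmon3_def lookup_add lookup_single when_def add.assoc add.left_commute
       intro!: poly_mapping_eqI simp: lookup_minus)

lemma add_xE_eq_xX_xE_iff: "\<alpha> + xE n = xX m + xE a \<longleftrightarrow> n = a \<and> \<alpha> = xX m"
  unfolding add_single_eq_iff
  by (auto simp: lookup_add lookup_single when_def intro!: poly_mapping_eqI simp: lookup_minus)

lemma qmon3_eq_iff: "qmon3 m a b = qmon3 m' a' b' \<longleftrightarrow> m = m' \<and> a = a' \<and> b = b'"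
proof
  assume eq: "qmon3 m a b = qmon3 m' a' b'"
  have "Poly_Mapping.lookup (qmon3 m a b) (Inl m) = 1" "Poly_Mapping.lookup (qmon3 m a b) (Inr (Inl a)) = 1"
    "Poly_Mapping.lookup (qmon3 m a b) (Inr (Inr b)) = 1"
    by (simp_all add: qmon3_def lookup_add lookup_single)
  then show "m = m' \<and> a = a' \<and> b = b'"
    unfolding eq by (auto simp: qmon3_def lookup_add lookup_single when_def split: if_splits)
qed simp

definition qmon_form :: "('a \<Rightarrow> 'm \<Rightarrow> 'm) \<Rightarrow> 'a \<Rightarrow> (('a, 'm) qvar \<Rightarrow>\<^sub>0 nat) \<Rightarrow> ('a \<times> 'a \<times> 'm) \<Rightarrow>\<^sub>0 int" where
  "qmon_form smult c mon = (if \<exists>m a b. mon = qmon3 m a b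
      then (case THE (m, a, b). mon = qmon3 m a b of (m, a, b) \<Rightarrow> frag_of (a, b, smult c m))
      else 0)"

definition qpoly_form :: "('a::comm_ring_1 \<Rightarrow> 'm \<Rightarrow> 'm) \<Rightarrow> (('a, 'm) qvar, 'a) mp \<Rightarrow> ('a \<times> 'a \<times> 'm) \<Rightarrow>\<^sub>0 int" where
  "qpoly_form smult = coeffwise (\<lambda>mon c. qmon_form smult c mon)"

lemma qmon_form_qmon3: "qmon_form smult c (qmon3 m a b) = frag_of (a, b, smult c m)"
proof -
  have "(THE (m', a', b'). qmon3 m a b = qmon3 m' a' b') = (m, a, b)"
    by (rule the_equality) (auto simp: qmon3_eq_iff)
  then show ?thesis by (auto simp: qmon_form_def)
qed

lemma qmon_form_other: "\<nexists>m a b. mon = qmon3 m a b \<Longrightarrow> qmon_form smult c mon = 0"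
  by (simp add: qmon_form_def)

lemma qmon_form_X_cases:
  obtains a b where "\<And>c n. qmon_form smult c (\<alpha> + xX n) = frag_of (a, b, smult c n)"
  | "\<And>c n. qmon_form smult c (\<alpha> + xX n) = 0"
proof (cases "\<exists>a b. \<alpha> = xE a + xE' b")
  case True
  then obtain a b where "\<alpha> = xE a + xE' b" by blast
  then have "\<alpha> + xX n = qmon3 n a b" for n by (simp add: qmon3_def add_ac)
  then show ?thesis using that(1) by (simp add: qmon_form_qmon3)
next
  case False
  then have "\<nexists>m a b. \<alpha> + xX n = qmon3 m a b" for n
    unfolding add_eq_qmon3_iff by auto
  then show ?thesis using that(2) by (simp add: qmon_form_other)
qed

lemma qmon_form_E_cases:
  obtains m b where "\<And>c n. qmon_form smult c (\<alpha> + xE n) = frag_of (n, b, smult c m)"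
  | "\<And>c n. qmon_form smult c (\<alpha> + xE n) = 0"
proof (cases "\<exists>m b. \<alpha> = xX m + xE' b")
  case True
  then obtain m b where "\<alpha> = xX m + xE' b" by blast
  then have "\<alpha> + xE n = qmon3 m n b" for n by (simp add: qmon3_def add_ac)
  then show ?thesis using that(1) by (simp add: qmon_form_qmon3)
next
  case False
  then have "\<nexists>m a b. \<alpha> + xE n = qmon3 m a b" for n
    unfolding add_eq_qmon3_iff by auto
  then show ?thesis using that(2) by (simp add: qmon_form_other)
qed

lemma qmon_form_E'_cases:
  obtains m a where "\<And>c n. qmon_form smult c (\<alpha> + xE' n) = frag_of (a, n, smult c m)"
  | "\<And>c n. qmon_form smult c (\<alpha> + xE' n) = 0"
proof (cases "\<exists>m a. \<alpha> = xX m + xE a")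
  case True
  then obtain m a where "\<alpha> = xX m + xE a" by blast
  then have "\<alpha> + xE' n = qmon3 m a n" for n by (simp add: qmon3_def add_ac)
  then show ?thesis using that(1) by (simp add: qmon_form_qmon3)
next
  case False
  then have "\<nexists>m a b. \<alpha> + xE' n = qmon3 m a b" for n
    unfolding add_eq_qmon3_iff by auto
  then show ?thesis using that(2) by (simp add: qmon_form_other)
qed

lemma qmon_form_EE'_cases:
  obtains m where "\<And>c n n'. qmon_form smult c (\<alpha> + (xE n + xE' n')) = frag_of (n, n', smult c m)"
  | "\<And>c n n'. qmon_form smult c (\<alpha> + (xE n + xE' n')) = 0"
proof (cases "\<exists>m. \<alpha> = xX m")
  case True
  then obtain m where "\<alpha> = xX m" by blast
  then have "\<alpha> + (xE n + xE' n') = qmon3 m n n'" for n n' by (simp add: qmon3_def add_ac)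
  then show ?thesis using that(1) by (simp add: qmon_form_qmon3)
next
  case False
  have "\<alpha> + (xE n + xE' n') \<noteq> qmon3 m a b" for n n' m a b
    using False add_eq_qmon3_iff[of "\<alpha> + xE n" "Inr (Inr n')"] add_xE_eq_xX_xE_iff[of \<alpha> n m a]
    by (auto simp: add.assoc)
  then show ?thesis using that(2) by (simp add: qmon_form_other)
qed

lemma single_mult_Var:
  "Poly_Mapping.single \<alpha> c * Var v = Poly_Mapping.single (\<alpha> + Poly_Mapping.single v 1) c"
  "Poly_Mapping.single \<alpha> c * (Const d * Var v) = Poly_Mapping.single (\<alpha> + Poly_Mapping.single v 1) (c * d)"
  "Poly_Mapping.single \<alpha> c * (Var v * Var w) =
     Poly_Mapping.single (\<alpha> + (Poly_Mapping.single v 1 + Poly_Mapping.single w 1)) c"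
  by (simp_all add: Var_def Const_def mult_single)

inductive_set QGens :: "('r \<Rightarrow> 'a::comm_ring_1) \<Rightarrow> ('a \<Rightarrow> 'm::ab_group_add \<Rightarrow> 'm) \<Rightarrow> (('a, 'm) qvar, 'a) mp set"
  for \<iota> smult
where
  X_add: "QX (m + n) - QX m - QX n \<in> QGens \<iota> smult"
| X_smult: "QX (smult a m) - Const a * QX m \<in> QGens \<iota> smult"
| E_add: "QE (a + b) - QE a - QE b \<in> QGens \<iota> smult"
| E'_add: "QE' (a + b) - QE' a - QE' b \<in> QGens \<iota> smult"
| E_mult: "QE (a * b) - Const a * QE b - Const b * QE a \<in> QGens \<iota> smult"
| E'_mult: "QE' (a * b) - Const a * QE' b - Const b * QE' a \<in> QGens \<iota> smult"
| E_iota: "QE (\<iota> r) \<in> QGens \<iota> smult"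
| E'_iota: "QE' (\<iota> r) \<in> QGens \<iota> smult"
| E_E'_antisym: "QE a * QE' b + QE b * QE' a \<in> QGens \<iota> smult"

context algebra_module
begin

lemma qmon_form_zero: "cong2 (qmon_form smult 0 mon) 0"
  by (cases "\<exists>m a b. mon = qmon3 m a b") (auto simp: qmon_form_qmon3 qmon_form_other wedge_zero_module)

lemma qmon_form_add: "cong2 (qmon_form smult (c + d) mon) (qmon_form smult c mon + qmon_form smult d mon)"
  by (cases "\<exists>m a b. mon = qmon3 m a b")
     (auto simp: qmon_form_qmon3 qmon_form_other scale_left_distrib wedge_add_module)

lemmas qpoly_form_add = coeffwise_add[where F = "\<lambda>mon c. qmon_form smult c mon", OF qmon_form_zero qmon_form_add,
  folded qpoly_form_def]
lemmas qpoly_form_diff = coeffwise_diff[where F = "\<lambda>mon c. qmon_form smult c mon", OF qmon_form_zero qmon_form_add,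
  folded qpoly_form_def]
lemmas qpoly_form_sum = coeffwise_sum[where F = "\<lambda>mon c. qmon_form smult c mon", OF qmon_form_zero qmon_form_add,
  folded qpoly_form_def]
lemmas qpoly_form_single = coeffwise_single[where F = "\<lambda>mon c. qmon_form smult c mon", OF qmon_form_zero qmon_form_add,
  folded qpoly_form_def]

lemma qpoly_form_singles:
  "cong2 (qpoly_form smult (Poly_Mapping.single K1 r1 - Poly_Mapping.single K2 r2))
     (qmon_form smult r1 K1 - qmon_form smult r2 K2)"
  "cong2 (qpoly_form smult (Poly_Mapping.single K1 r1 + Poly_Mapping.single K2 r2))
     (qmon_form smult r1 K1 + qmon_form smult r2 K2)"
  "cong2 (qpoly_form smult (Poly_Mapping.single K1 r1 - Poly_Mapping.single K2 r2 - Poly_Mapping.single K3 r3))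
     (qmon_form smult r1 K1 - qmon_form smult r2 K2 - qmon_form smult r3 K3)"
  by (intro cong_gen_trans[OF qpoly_form_diff] cong_gen_trans[OF qpoly_form_add] cong_gen_diff cong_gen_add
      qpoly_form_single)+

end

context algebra_module
begin

lemma qpoly_form_mult_X_gens:
  "cong2 (qpoly_form smult (Poly_Mapping.single \<alpha> c * (QX (m + n) - QX m - QX n))) 0"
  "cong2 (qpoly_form smult (Poly_Mapping.single \<alpha> c * (QX (smult a m) - Const a * QX m))) 0"
proof -
  show "cong2 (qpoly_form smult (Poly_Mapping.single \<alpha> c * (QX (m + n) - QX m - QX n))) 0"
    unfolding right_diff_distrib single_mult_Var
    by (rule cong_gen_trans[OF qpoly_form_singles(3)], cases rule: qmon_form_X_cases[of smult \<alpha>])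
       (simp_all add: scale_right_distrib wedge_add_module flip: cong_gen_eq_add_iff)
  show "cong2 (qpoly_form smult (Poly_Mapping.single \<alpha> c * (QX (smult a m) - Const a * QX m))) 0"
    unfolding right_diff_distrib single_mult_Var
    by (rule cong_gen_trans[OF qpoly_form_singles(1)], cases rule: qmon_form_X_cases[of smult \<alpha>]) simp_all
qed

lemma qpoly_form_mult_E_gens:
  "cong2 (qpoly_form smult (Poly_Mapping.single \<alpha> c * (QE (a + b) - QE a - QE b))) 0"
  "cong2 (qpoly_form smult (Poly_Mapping.single \<alpha> c * (QE (a * b) - Const a * QE b - Const b * QE a))) 0"
  "cong2 (qpoly_form smult (Poly_Mapping.single \<alpha> c * QE (\<iota> r))) 0"
proof -
  show "cong2 (qpoly_form smult (Poly_Mapping.single \<alpha> c * (QE (a + b) - QE a - QE b))) 0"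
    unfolding right_diff_distrib single_mult_Var
    by (rule cong_gen_trans[OF qpoly_form_singles(3)], cases rule: qmon_form_E_cases[of smult \<alpha>])
       (simp_all add: wedge_add_left flip: cong_gen_eq_add_iff)
  have "cong2 (qpoly_form smult (Poly_Mapping.single \<alpha> c * (QE (a * b) - Const a * QE b - Const b * QE a)))
      (qmon_form smult c (\<alpha> + xE (a * b)) - qmon_form smult (c * a) (\<alpha> + xE b) - qmon_form smult (c * b) (\<alpha> + xE a))"
    unfolding right_diff_distrib single_mult_Var by (rule qpoly_form_singles(3))
  also have "cong2 \<dots> 0"
  proof (cases rule: qmon_form_E_cases[of smult \<alpha>])
    case (1 m b')
    have "cong2 (wedge (a * b) b' (smult c m)) (wedge b b' (smult (c * a) m) + wedge a b' (smult (c * b) m))"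
      using wedge_mult_left[of a b b' "smult c m"] by (simp add: mult_ac add.commute)
    with 1 show ?thesis by (simp flip: cong_gen_eq_add_iff)
  qed simp
  finally show "cong2 (qpoly_form smult (Poly_Mapping.single \<alpha> c * (QE (a * b) - Const a * QE b - Const b * QE a))) 0" .
  show "cong2 (qpoly_form smult (Poly_Mapping.single \<alpha> c * QE (\<iota> r))) 0"
    unfolding single_mult_Var
    by (rule cong_gen_trans[OF qpoly_form_single], cases rule: qmon_form_E_cases[of smult \<alpha>])
       (simp_all add: wedge_iota_left)
qed

lemma qpoly_form_mult_E'_gens:
  "cong2 (qpoly_form smult (Poly_Mapping.single \<alpha> c * (QE' (a + b) - QE' a - QE' b))) 0"
  "cong2 (qpoly_form smult (Poly_Mapping.single \<alpha> c * (QE' (a * b) - Const a * QE' b - Const b * QE' a))) 0"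
  "cong2 (qpoly_form smult (Poly_Mapping.single \<alpha> c * QE' (\<iota> r))) 0"
proof -
  show "cong2 (qpoly_form smult (Poly_Mapping.single \<alpha> c * (QE' (a + b) - QE' a - QE' b))) 0"
    unfolding right_diff_distrib single_mult_Var
    by (rule cong_gen_trans[OF qpoly_form_singles(3)], cases rule: qmon_form_E'_cases[of smult \<alpha>])
       (simp_all add: wedge_add_right flip: cong_gen_eq_add_iff)
  have "cong2 (qpoly_form smult (Poly_Mapping.single \<alpha> c * (QE' (a * b) - Const a * QE' b - Const b * QE' a)))
      (qmon_form smult c (\<alpha> + xE' (a * b)) - qmon_form smult (c * a) (\<alpha> + xE' b) - qmon_form smult (c * b) (\<alpha> + xE' a))"
    unfolding right_diff_distrib single_mult_Var by (rule qpoly_form_singles(3))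
  also have "cong2 \<dots> 0"
  proof (cases rule: qmon_form_E'_cases[of smult \<alpha>])
    case (1 m a')
    have "cong2 (wedge a' (a * b) (smult c m)) (wedge a' b (smult (c * a) m) + wedge a' a (smult (c * b) m))"
      using wedge_mult_right[of a' a b "smult c m"] by (simp add: mult_ac add.commute)
    with 1 show ?thesis by (simp flip: cong_gen_eq_add_iff)
  qed simp
  finally show "cong2 (qpoly_form smult (Poly_Mapping.single \<alpha> c * (QE' (a * b) - Const a * QE' b - Const b * QE' a))) 0" .
  show "cong2 (qpoly_form smult (Poly_Mapping.single \<alpha> c * QE' (\<iota> r))) 0"
    unfolding single_mult_Var
    by (rule cong_gen_trans[OF qpoly_form_single], cases rule: qmon_form_E'_cases[of smult \<alpha>])
       (simp_all add: wedge_iota_right)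
qed

lemma qpoly_form_mult_antisym_gen:
  "cong2 (qpoly_form smult (Poly_Mapping.single \<alpha> c * (QE a * QE' b + QE b * QE' a))) 0"
  unfolding distrib_left single_mult_Var
  by (rule cong_gen_trans[OF qpoly_form_singles(2)], cases rule: qmon_form_EE'_cases[of smult \<alpha>])
     (simp_all add: wedge_antisym)

lemma qpoly_form_mult_QGens:
  assumes "g \<in> QGens \<iota> smult"
  shows "cong2 (qpoly_form smult (p * g)) 0"
proof -
  have "p * g = (\<Sum>\<alpha>\<in>Poly_Mapping.keys p. Poly_Mapping.single \<alpha> (Poly_Mapping.lookup p \<alpha>) * g)"
    by (subst (1) sum_single_lookup[symmetric]) (simp add: sum_distrib_right)
  then have "cong2 (qpoly_form smult (p * g))
      (\<Sum>\<alpha>\<in>Poly_Mapping.keys p. qpoly_form smult (Poly_Mapping.single \<alpha> (Poly_Mapping.lookup p \<alpha>) * g))"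
    by (simp add: qpoly_form_sum)
  also have "cong2 \<dots> (\<Sum>\<alpha>\<in>Poly_Mapping.keys p. 0)"
    using assms
    by (intro cong_gen_sum, induction rule: QGens.induct)
       (simp_all add: qpoly_form_mult_X_gens qpoly_form_mult_E_gens qpoly_form_mult_E'_gens
         qpoly_form_mult_antisym_gen)
  finally show ?thesis by simp
qed

lemma qpoly_form_gen_ideal:
  assumes "x \<in> gen_ideal (QGens \<iota> smult)"
  shows "cong2 (qpoly_form smult x) 0"
proof -
  let ?I = "{x. \<forall>p. cong2 (qpoly_form smult (p * x)) 0}"
  have "is_ideal ?I"
  proof (rule is_idealI)
    show "0 \<in> ?I" by (simp add: qpoly_form_def coeffwise_def)
    show "x - y \<in> ?I" if "x \<in> ?I" "y \<in> ?I" for x y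
      using that cong_gen_trans[OF qpoly_form_diff cong_gen_diff] by (fastforce simp: right_diff_distrib)
    show "q * x \<in> ?I" if "x \<in> ?I" for q x
      using that by (simp add: mult.assoc[symmetric])
  qed
  moreover have "QGens \<iota> smult \<subseteq> ?I"
    using qpoly_form_mult_QGens by blast
  ultimately have "x \<in> ?I"
    using gen_ideal_least assms by blast
  then have "cong2 (qpoly_form smult (1 * x)) 0"
    by blast
  then show ?thesis
    by simp
qed

end

section \<open>Evaluating \<open>T\<^sup>2(S\<^sub>A(M))\<close> in the polynomial model\<close>

lemma is_ideal_Emb_Der:
  assumes "is_ideal I"
  shows "is_ideal {x :: ('v, 'r::comm_ring_1) mp. Emb x \<in> I \<and> Der x \<in> I}"
  by (rule is_idealI) (simp_all add: assms ideal_zero ideal_diff ideal_add ideal_mult_left ideal_mult_right)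

lemma Tideal_subset:
  assumes "is_ideal I" "\<And>j. j \<in> J \<Longrightarrow> Emb j \<in> I \<and> Der j \<in> I"
  shows "Tideal J \<subseteq> I"
  unfolding Tideal_def using assms by (intro gen_ideal_least) auto

definition form1_to_Q :: "('a \<Rightarrow> (('a, 'm) qvar, 'a::comm_ring_1) mp) \<Rightarrow> (('a \<times> 'm) \<Rightarrow>\<^sub>0 int) \<Rightarrow> (('a, 'm) qvar, 'a) mp" where
  "form1_to_Q E = int_extend (\<lambda>(a, m). QX m * E a)"

fun T2_to_Q_var :: "('m \<Rightarrow> ('a \<times> 'm) \<Rightarrow>\<^sub>0 int) \<Rightarrow> (('a + 'm) + ('a + 'm)) + (('a + 'm) + ('a + 'm))
    \<Rightarrow> (('a, 'm) qvar, 'a::comm_ring_1) mp" where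
  "T2_to_Q_var nabla (Inl (Inl (Inl a))) = Const a"
| "T2_to_Q_var nabla (Inl (Inl (Inr m))) = QX m"
| "T2_to_Q_var nabla (Inl (Inr (Inl a))) = QE a"
| "T2_to_Q_var nabla (Inl (Inr (Inr m))) = form1_to_Q QE (nabla m)"
| "T2_to_Q_var nabla (Inr (Inl (Inl a))) = QE' a"
| "T2_to_Q_var nabla (Inr (Inl (Inr m))) = form1_to_Q QE' (nabla m)"
| "T2_to_Q_var nabla (Inr (Inr v)) = 0"

lemma qmon3_poly: "Const r * (QX m * (QE a * QE' b)) = Poly_Mapping.single (qmon3 m a b) r"
  by (simp add: Const_def Var_def mult_single qmon3_def add.assoc)

lemma SA_relsE:
  assumes "r \<in> SA_rels \<iota> smult"
  obtains (A_add) a b where "r = Var (Inl (a + b)) - Var (Inl a) - Var (Inl b)"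
    | (A_mult) a b where "r = Var (Inl (a * b)) - Var (Inl a) * Var (Inl b)"
    | (A_one) "r = Var (Inl 1) - 1"
    | (A_iota) c where "r = Var (Inl (\<iota> c)) - Const c"
    | (M_add) m n where "r = Var (Inr (m + n)) - Var (Inr m) - Var (Inr n)"
    | (M_smult) a m where "r = Var (Inr (smult a m)) - Var (Inl a) * Var (Inr m)"
  using assms unfolding SA_rels_def
  apply -
  by (elim UnE CollectE exE conjE insertE) blast+

locale algebra_module_connection = algebra_module \<iota> smult
  for \<iota> :: "'r::comm_ring_1 \<Rightarrow> 'a::comm_ring_1" and smult :: "'a \<Rightarrow> 'm::ab_group_add \<Rightarrow> 'm" +
  fixes nabla :: "'m \<Rightarrow> ('a \<times> 'm) \<Rightarrow>\<^sub>0 int"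
  assumes connection: "module_connection \<iota> smult nabla"
begin

abbreviation IQ :: "(('a, 'm) qvar, 'a) mp set" where
  "IQ \<equiv> gen_ideal (QGens \<iota> smult)"

abbreviation T2_to_Q :: "((('a + 'm) + ('a + 'm)) + (('a + 'm) + ('a + 'm)), 'r) mp \<Rightarrow> (('a, 'm) qvar, 'a) mp" where
  "T2_to_Q \<equiv> peval (\<lambda>r. Const (\<iota> r)) (T2_to_Q_var nabla)"

lemma is_ring_hom_Const_iota: "is_ring_hom (\<lambda>r. Const (\<iota> r) :: (('a, 'm) qvar, 'a) mp)"
  using is_ring_hom_comp[OF is_ring_hom_iota is_ring_hom_Const] by (simp add: o_def)

lemma is_ring_hom_T2_to_Q: "is_ring_hom T2_to_Q"
  by (rule is_ring_hom_peval[OF is_ring_hom_Const_iota])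

lemmas T2_to_Q_simps = ring_hom_simps[OF is_ring_hom_T2_to_Q] peval_Const[OF is_ring_hom_Const_iota]
  peval_Var[OF is_ring_hom_Const_iota] T2_to_Q_var.simps

lemma is_ideal_IQ: "is_ideal IQ"
  by (rule is_ideal_gen_ideal)

lemmas IQ_closed = ideal_add[OF is_ideal_IQ] ideal_diff[OF is_ideal_IQ] ideal_minus[OF is_ideal_IQ]
  ideal_mult_left[OF is_ideal_IQ] ideal_mult_right[OF is_ideal_IQ] ideal_zero[OF is_ideal_IQ]
  ideal_sum[OF is_ideal_IQ]

lemmas QGens_in_IQ = QGens.intros[where \<iota> = \<iota> and smult = smult, THEN gen_ideal_base]

definition Q_derivation :: "('a \<Rightarrow> (('a, 'm) qvar, 'a) mp) \<Rightarrow> bool" where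
  "Q_derivation E \<longleftrightarrow> (\<forall>a b. E (a + b) - E a - E b \<in> IQ)
     \<and> (\<forall>a b. E (a * b) - Const a * E b - Const b * E a \<in> IQ) \<and> (\<forall>r. E (\<iota> r) \<in> IQ)"

lemma Q_derivation_QE: "Q_derivation QE" and Q_derivation_QE': "Q_derivation QE'"
  by (simp_all add: Q_derivation_def QGens_in_IQ)

lemma form1_to_Q_rel:
  assumes E: "Q_derivation E" and g: "g \<in> OM1_rels \<iota> smult"
  shows "form1_to_Q E g \<in> IQ"
proof -
  from g consider
      (add_left) a b m where "g = frag_of (a + b, m) - frag_of (a, m) - frag_of (b, m)"
    | (add_right) a m n where "g = frag_of (a, m + n) - frag_of (a, m) - frag_of (a, n)"
    | (mult) a b m where "g = frag_of (a * b, m) - frag_of (a, smult b m) - frag_of (b, smult a m)"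
    | (iota) r m where "g = frag_of (\<iota> r, m)"
    unfolding OM1_rels_def by (elim UnE CollectE exE conjE) blast+
  then show ?thesis
  proof cases
    case (add_left a b m)
    have "form1_to_Q E g = QX m * (E (a + b) - E a - E b)"
      unfolding add_left by (simp add: form1_to_Q_def int_extend_simps algebra_simps)
    with E show ?thesis by (simp add: Q_derivation_def IQ_closed)
  next
    case (add_right a m n)
    have "form1_to_Q E g = E a * (QX (m + n) - QX m - QX n)"
      unfolding add_right by (simp add: form1_to_Q_def int_extend_simps algebra_simps)
    then show ?thesis by (simp add: IQ_closed QGens_in_IQ)
  next
    case (mult a b m)
    have "form1_to_Q E g = QX m * (E (a * b) - Const a * E b - Const b * E a)
        - E a * (QX (smult b m) - Const b * QX m) - E b * (QX (smult a m) - Const a * QX m)"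
      unfolding mult by (simp add: form1_to_Q_def int_extend_simps algebra_simps)
    with E show ?thesis by (simp add: Q_derivation_def IQ_closed QGens_in_IQ)
  next
    case (iota r m)
    with E show ?thesis
      by (simp add: form1_to_Q_def int_extend_simps Q_derivation_def IQ_closed)
  qed
qed

lemma form1_to_Q_cong:
  assumes "Q_derivation E" "OM1_eq \<iota> smult x y"
  shows "form1_to_Q E x - form1_to_Q E y \<in> IQ"
proof -
  have "form1_to_Q E (x - y) \<in> IQ"
  proof (rule gen_subgroup_image_in_ideal[OF is_ideal_IQ, where G = "OM1_rels \<iota> smult"])
    show "x - y \<in> gen_subgroup (OM1_rels \<iota> smult)"
      using assms(2) by (simp add: OM1_eq_def)
  qed (simp_all add: form1_to_Q_def int_extend_add form1_to_Q_rel[OF assms(1), unfolded form1_to_Q_def])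
  then show ?thesis
    by (simp add: form1_to_Q_def int_extend_diff)
qed

lemma form1_to_Q_scale: "form1_to_Q E (OM1_scale smult a x) - Const a * form1_to_Q E x \<in> IQ"
proof -
  have "form1_to_Q E (OM1_scale smult a x) - Const a * form1_to_Q E x =
     (\<Sum>k\<in>Poly_Mapping.keys x. of_int (Poly_Mapping.lookup x k) * E (fst k) *
        (QX (smult a (snd k)) - Const a * QX (snd k)))"
    by (simp add: OM1_scale_def form1_to_Q_def int_extend_sum int_extend_single case_prod_beta
        int_extend_def[of _ x] sum_distrib_left sum_subtractf[symmetric] algebra_simps)
  also have "\<dots> \<in> IQ"
    by (intro ideal_sum[OF is_ideal_IQ] ideal_mult_left[OF is_ideal_IQ] QGens_in_IQ)
  finally show ?thesis .
qed

end

context algebra_module_connection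
begin

lemma nabla_add:
  assumes "Q_derivation E"
  shows "form1_to_Q E (nabla (m + n)) - form1_to_Q E (nabla m) - form1_to_Q E (nabla n) \<in> IQ"
  using form1_to_Q_cong[OF assms, of "nabla (m + n)" "nabla m + nabla n"] connection
  by (simp add: module_connection_def form1_to_Q_def int_extend_add diff_diff_eq)

lemma nabla_smult:
  assumes "Q_derivation E"
  shows "form1_to_Q E (nabla (smult a m)) - (Const a * form1_to_Q E (nabla m) + E a * QX m) \<in> IQ"
proof -
  have "form1_to_Q E (nabla (smult a m)) - form1_to_Q E (OM1_scale smult a (nabla m) + frag_of (a, m)) \<in> IQ"
    using form1_to_Q_cong[OF assms] connection by (simp add: module_connection_def)
  from ideal_add[OF is_ideal_IQ this form1_to_Q_scale[of E a "nabla m"]]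
  show ?thesis
    by (simp add: form1_to_Q_def int_extend_add int_extend_single algebra_simps)
qed

lemma form1_to_Q_antisym: "QE' a * form1_to_Q QE x + QE a * form1_to_Q QE' x \<in> IQ"
proof -
  have "QE' a * form1_to_Q QE x + QE a * form1_to_Q QE' x =
     (\<Sum>k\<in>Poly_Mapping.keys x. (of_int (Poly_Mapping.lookup x k) * QX (snd k)) *
        (QE (fst k) * QE' a + QE a * QE' (fst k)))"
    by (simp add: form1_to_Q_def int_extend_def case_prod_beta sum_distrib_left
        sum.distrib[symmetric] algebra_simps)
  also have "\<dots> \<in> IQ"
    by (intro ideal_sum[OF is_ideal_IQ] ideal_mult_left[OF is_ideal_IQ] QGens_in_IQ)
  finally show ?thesis .
qed

lemma T2_to_Q_SA_rel:
  assumes "r \<in> SA_rels \<iota> smult"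
  shows "T2_to_Q (Emb (Emb r)) \<in> IQ \<and> T2_to_Q (Emb (Der r)) \<in> IQ \<and>
    T2_to_Q (Der (Emb r)) \<in> IQ \<and> T2_to_Q (Der (Der r)) \<in> IQ"
  using assms
proof (cases rule: SA_relsE)
  case (A_add a b)
  show ?thesis unfolding A_add
    using QGens_in_IQ(3,4)[of a b] by (simp add: T2_to_Q_simps Const_add IQ_closed)
next
  case (A_mult a b)
  show ?thesis unfolding A_mult
    using QGens_in_IQ(5,6)[of a b] IQ_closed(3)[OF QGens_in_IQ(9)[of b a]]
    by (simp add: T2_to_Q_simps Const_mult IQ_closed algebra_simps)
next
  case A_one
  show ?thesis unfolding A_one
    using QGens_in_IQ(7,8)[of 1] by (simp add: T2_to_Q_simps IQ_closed ring_hom_one[OF is_ring_hom_iota])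
next
  case (A_iota c)
  show ?thesis unfolding A_iota
    using QGens_in_IQ(7,8)[of c] by (simp add: T2_to_Q_simps IQ_closed)
next
  case (M_add m n)
  show ?thesis unfolding M_add
    using QGens_in_IQ(1)[of m n] nabla_add[OF Q_derivation_QE] nabla_add[OF Q_derivation_QE']
    by (simp add: T2_to_Q_simps IQ_closed)
next
  case (M_smult a m)
  show ?thesis unfolding M_smult
    using QGens_in_IQ(2)[of a m] nabla_smult[OF Q_derivation_QE] nabla_smult[OF Q_derivation_QE']
      IQ_closed(3)[OF form1_to_Q_antisym[of a "nabla m"]]
    by (simp add: T2_to_Q_simps IQ_closed algebra_simps)
qed

lemma T2_to_Q_T2_ideal:
  assumes "x \<in> T2"
  shows "T2_to_Q x \<in> IQ"
proof -
  define S where "S = T2_to_Q -` IQ"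
  define S1 where "S1 = {x. Emb x \<in> S \<and> Der x \<in> S}"
  have S: "is_ideal S"
    unfolding S_def by (rule is_ideal_vimage[OF is_ring_hom_T2_to_Q is_ideal_IQ])
  have S1: "is_ideal S1"
    unfolding S1_def by (rule is_ideal_Emb_Der[OF S])
  have "SA_ideal \<iota> smult \<subseteq> {j. Emb j \<in> S1 \<and> Der j \<in> S1}"
    unfolding SA_ideal_def
    by (rule gen_ideal_least[OF is_ideal_Emb_Der[OF S1]]) (auto simp: S_def S1_def T2_to_Q_SA_rel)
  then have "Tideal (SA_ideal \<iota> smult) \<subseteq> S1"
    by (intro Tideal_subset[OF S1]) auto
  then have "T2 \<subseteq> S"
    unfolding T2_ideal_def by (intro Tideal_subset[OF S]) (auto simp: S1_def)
  with assms show ?thesis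
    by (auto simp: S_def)
qed

lemma qpoly_form_T2_to_Q_CK_M_term:
  "cong2 (qpoly_form smult (T2_to_Q (Const (of_int k) * T2_m m * (T2_da a * T2_d'a b - T2_da b * T2_d'a a))))
     (frag_cmul k (wedge a b m - wedge b a m))"
proof -
  have eq: "T2_to_Q (Const (of_int k) * T2_m m * (T2_da a * T2_d'a b - T2_da b * T2_d'a a))
      = Poly_Mapping.single (qmon3 m a b) (of_int k) - Poly_Mapping.single (qmon3 m b a) (of_int k)"
    by (simp add: T2_to_Q_simps ring_hom_of_int[OF is_ring_hom_iota] right_diff_distrib mult.assoc
        qmon3_poly)
  have "cong2 (qpoly_form smult (T2_to_Q (Const (of_int k) * T2_m m * (T2_da a * T2_d'a b - T2_da b * T2_d'a a))))
      (qmon_form smult (of_int k) (qmon3 m a b) - qmon_form smult (of_int k) (qmon3 m b a))"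
    unfolding eq by (rule qpoly_form_singles(1))
  also have "\<dots> = wedge a b (smult (of_int k) m) - wedge b a (smult (of_int k) m)"
    by (simp add: qmon_form_qmon3)
  also have "cong2 \<dots> (frag_cmul k (wedge a b m) - frag_cmul k (wedge b a m))"
    by (intro cong_gen_diff wedge_of_int_module)
  finally show ?thesis
    by (simp add: frag_cmul_diff_right)
qed

lemma qpoly_form_T2_to_Q_CK_M: "cong2 (qpoly_form smult (T2_to_Q (CK_M nabla m))) (alt_curvature nabla m)"
  unfolding CK_M_eq alt_curvature_def ring_hom_sum[OF is_ring_hom_T2_to_Q]
  by (intro cong_gen_trans[OF qpoly_form_sum] cong_gen_sum qpoly_form_T2_to_Q_CK_M_term)

lemma curvature_cong_zero_if_CK_M_in_T2:
  assumes "CK_M nabla m \<in> T2" and "2 * h = (1::'a)"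
  shows "cong2 (curvature nabla m) 0"
proof -
  have "cong2 (qpoly_form smult (T2_to_Q (CK_M nabla m))) 0"
    by (rule qpoly_form_gen_ideal[OF T2_to_Q_T2_ideal[OF assms(1)]])
  then have "cong2 (alt_curvature nabla m) 0"
    using cong_gen_trans[OF cong_gen_sym[OF qpoly_form_T2_to_Q_CK_M]] by blast
  then have "cong2 (OM2_scale smult h (alt_curvature nabla m)) (OM2_scale smult h 0)"
    by (rule OM2_scale_cong)
  then show ?thesis
    using cong_gen_trans[OF curvature_cong_alt_curvature[OF assms(2)]] by (simp add: OM2_scale_def)
qed

end

theorem mainTheorem12:
  fixes \<iota> :: "'r::comm_ring_1 \<Rightarrow> 'a::comm_ring_1"
    and smult :: "'a \<Rightarrow> 'm::ab_group_add \<Rightarrow> 'm"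
    and nabla :: "'m \<Rightarrow> ('a \<times> 'm) \<Rightarrow>\<^sub>0 int"
  assumes hom_add: "\<And>x y. \<iota> (x + y) = \<iota> x + \<iota> y"
    and hom_mult: "\<And>x y. \<iota> (x * y) = \<iota> x * \<iota> y"
    and hom_one: "\<iota> 1 = 1"
    and M_module: "module smult"
    and conn: "module_connection \<iota> smult nabla"
    and two_unit: "\<exists>h::'a. 2 * h = 1"
  shows "(\<forall>h m. 2 * h = (1::'a) \<longrightarrow>
            OM2_eq \<iota> smult (curvature nabla m)
              (OM2_scale smult h (phi \<iota> smult (CK_M nabla m :: _ \<Rightarrow>\<^sub>0 'r))))
       \<and> ((\<forall>m. OM2_eq \<iota> smult (curvature nabla m) 0) \<longleftrightarrow> flat_conn \<iota> smult nabla)"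
proof -
  interpret algebra_module_connection \<iota> smult nabla
    using M_module conn hom_add hom_mult hom_one
    by (simp add: algebra_module_connection_def algebra_module_def algebra_module_axioms_def
        algebra_module_connection_axioms_def is_ring_hom_def)
  obtain h :: 'a where h: "2 * h = 1"
    using two_unit by blast
  have "flat_conn \<iota> smult nabla \<longleftrightarrow> (\<forall>m. (CK_M nabla m :: _ \<Rightarrow>\<^sub>0 'r) \<in> T2)"
    by (simp add: flat_conn_def CK_A_eq ideal_zero[OF is_ideal_T2])
  then show ?thesis
    using curvature_cong_phi_CK_M CK_M_in_T2_if_curvature_cong_zero
      curvature_cong_zero_if_CK_M_in_T2[OF _ h]
    by (auto simp: OM2_eq_eq_cong_gen)
qed

end
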